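(* Consider the two-layer evolutionary process described in the context, with death-Birth updating in both layers, and let $\boldsymbol{\xi}=(\xi^{[1]},\xi^{[2]})$ be any initial state that is not one of the four states in which both layers are monomorphic. Let $\rho^{[2]}(\boldsymbol{\xi})$ be the probability that, starting from $\boldsymbol{\xi}$, layer 2 eventually consists only of mutants. Then, under weak selection, the mutant is favored, i.e. $\left.\frac{\mathrm{d}}{\mathrm{d}\delta}\rho^{[2]}(\boldsymbol{\xi})\right|_{\delta=0}>0$, if and only if $$-(r-1)\,\tilde\theta_2+c\,\tilde\phi_{2,0}+b\,(\tilde\phi_{0,1}-\tilde\phi_{2,1})>0 .$$
   Context: There are $N\ge 2$ individuals $1,\dots,N$. For each layer $L\in\{1,2\}$ there is a connected undirected weighted graph on $\{1,\dots,N\}$ with symmetric nonnegative weights $w^{[L]}_{ij}$; let $s^{[L]}_i=\sum_j w^{[L]}_{ij}>0$, $p^{[L]}_{ij}=w^{[L]}_{ij}/s^{[L]}_i$, $P^{[L]}=(p^{[L]}_{ij})$, and $\pi^{[L]}_i=s^{[L]}_i/\sum_k s^{[L]}_k$. A state is $(x^{[1]},x^{[2]})\in\{0,1\}^N\times\{0,1\}^N$; $x^{[1]}_i=1$ ($0$) means $i$ is a cooperator (defector) in layer 1, $x^{[2]}_i=1$ ($0$) means $i$ is a mutant (resident) in layer 2. The payoff of $i$ is $u_i=-c\,x^{[1]}_i+\sum_j b\,p^{[1]}_{ij}x^{[1]}_j+(r-1)x^{[2]}_i+1$, with $r\ge0$, and the fecundity is $F_i=1+\delta u_i$, $\delta\ge0$.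 In each time step, simultaneously and independently in each layer $L$: choose $i$ uniformly at random, choose $j$ with probability $w^{[L]}_{ij}F_j/\sum_k w^{[L]}_{ik}F_k$, and set $x^{[L]}_i\leftarrow x^{[L]}_j$. Let $\hat\xi^{[L]}=\sum_i\pi^{[L]}_i\xi^{[L]}_i$. Let $(\tilde\beta_{ij})$ be the unique solution of: $\tilde\beta_{ii}=N(\xi^{[2]}_i-\hat\xi^{[2]})+\sum_k p^{[2]}_{ik}\tilde\beta_{kk}$; for $i\neq j$, $\tilde\beta_{ij}=\tfrac N2(\xi^{[2]}_i\xi^{[2]}_j-\hat\xi^{[2]})+\tfrac12\sum_k p^{[2]}_{ik}\tilde\beta_{kj}+\tfrac12\sum_k p^{[2]}_{jk}\tilde\beta_{ik}$; and $\sum_i\pi^{[2]}_i\tilde\beta_{ii}=0$. Let $(\tilde\gamma_{ij})$ be the unique solution of: for all $i,j$, $\tilde\gamma_{ij}=\frac{N^2}{2N-1}(\xi^{[2]}_i\xi^{[1]}_j-\hat\xi^{[1]}\hat\xi^{[2]})+\frac{1}{2N-1}\sum_{k_1,k_2}p^{[2]}_{ik_1}p^{[1]}_{jk_2}\tilde\gamma_{k_1k_2}+\frac{N-1}{2N-1}\Big(\sum_k p^{[2]}_{ik}\tilde\gamma_{kj}+\sum_k p^{[1]}_{jk}\tilde\gamma_{ik}\Big)$, with $\sum_i\pi^{[2]}_i\tilde\gamma_{ii}=0$. Define $\tilde\theta_n=\sum_{i,j}\pi^{[2]}_i\big((P^{[2]})^n\big)_{ij}\tilde\beta_{ij}$ and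 $\tilde\phi_{n,m}=\sum_{i,j}\pi^{[2]}_i\big((P^{[2]})^n(P^{[1]})^m\big)_{ij}\tilde\gamma_{ij}$ (first $n$ random-walk steps in the constant-selection layer 2, then $m$ steps in the game layer 1). *)

theory Defs
  imports Complex_Main "HOL-Library.Cardinality"
begin

text \<open>Individuals are the elements of a finite type 'n, so N = CARD('n).
  States are pairs (x1, x2) of boolean vectors: True = cooperator (layer 1) / mutant (layer 2).\<close>

type_synonym 'n state = "('n \<Rightarrow> bool) \<times> ('n \<Rightarrow> bool)"

definition graph_ok :: "('n::finite \<Rightarrow> 'n \<Rightarrow> real) \<Rightarrow> bool" where
  "graph_ok w \<longleftrightarrow> (\<forall>i j. w i j = w j i) \<and> (\<forall>i j. 0 \<le> w i j)
     \<and> (\<forall>i j. (i, j) \<in> {(a, b). w a b > 0}\<^sup>*)"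

definition strength :: "('n::finite \<Rightarrow> 'n \<Rightarrow> real) \<Rightarrow> 'n \<Rightarrow> real" where
  "strength w i = (\<Sum>j\<in>UNIV. w i j)"

definition tprob :: "('n::finite \<Rightarrow> 'n \<Rightarrow> real) \<Rightarrow> 'n \<Rightarrow> 'n \<Rightarrow> real" where
  "tprob w i j = w i j / strength w i"

definition sdist :: "('n::finite \<Rightarrow> 'n \<Rightarrow> real) \<Rightarrow> 'n \<Rightarrow> real" where
  "sdist w i = strength w i / (\<Sum>k\<in>UNIV. strength w k)"

definition hat :: "('n::finite \<Rightarrow> 'n \<Rightarrow> real) \<Rightarrow> ('n \<Rightarrow> bool) \<Rightarrow> real" where
  "hat w x = (\<Sum>i\<in>UNIV. sdist w i * of_bool (x i))"

primrec mpow :: "('n::finite \<Rightarrow> 'n \<Rightarrow> real) \<Rightarrow> nat \<Rightarrow> 'n \<Rightarrow> 'n \<Rightarrow> real" where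
  "mpow P 0 i j = of_bool (i = j)"
| "mpow P (Suc n) i j = (\<Sum>k\<in>UNIV. P i k * mpow P n k j)"

definition payoff :: "real \<Rightarrow> real \<Rightarrow> real \<Rightarrow> ('n::finite \<Rightarrow> 'n \<Rightarrow> real) \<Rightarrow> 'n state \<Rightarrow> 'n \<Rightarrow> real" where
  "payoff b c r w1 s i = - c * of_bool (fst s i)
     + (\<Sum>j\<in>UNIV. b * tprob w1 i j * of_bool (fst s j))
     + (r - 1) * of_bool (snd s i) + 1"

definition fecundity :: "real \<Rightarrow> real \<Rightarrow> real \<Rightarrow> ('n::finite \<Rightarrow> 'n \<Rightarrow> real) \<Rightarrow> real \<Rightarrow> 'n state \<Rightarrow> 'n \<Rightarrow> real" where
  "fecundity b c r w1 \<delta> s i = 1 + \<delta> * payoff b c r w1 s i"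

text \<open>death-Birth update in one layer: probability that layer configuration x becomes y,
  given fecundities F: choose i uniformly, then j with prob. w i j F j / sum_k w i k F k,
  and set x_i := x_j.\<close>
definition layer_step :: "('n::finite \<Rightarrow> 'n \<Rightarrow> real) \<Rightarrow> ('n \<Rightarrow> real) \<Rightarrow> ('n \<Rightarrow> bool) \<Rightarrow> ('n \<Rightarrow> bool) \<Rightarrow> real" where
  "layer_step w F x y = (1 / real CARD('n)) *
     (\<Sum>i\<in>UNIV. \<Sum>j\<in>UNIV. if y = x(i := x j) then w i j * F j / (\<Sum>k\<in>UNIV. w i k * F k) else 0)"

text \<open>One-step transition kernel of the two-layer chain (layers update simultaneously and
  independently, both using fecundities of the current state).\<close>
definition trans :: "real \<Rightarrow> real \<Rightarrow> real \<Rightarrow> ('n::finite \<Rightarrow> 'n \<Rightarrow> real) \<Rightarrow> ('n \<Rightarrow> 'n \<Rightarrow> real) \<Rightarrow> real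
     \<Rightarrow> 'n state \<Rightarrow> 'n state \<Rightarrow> real" where
  "trans b c r w1 w2 \<delta> s s' =
     layer_step w1 (fecundity b c r w1 \<delta> s) (fst s) (fst s') *
     layer_step w2 (fecundity b c r w1 \<delta> s) (snd s) (snd s')"

primrec nstep :: "('s::finite \<Rightarrow> 's \<Rightarrow> real) \<Rightarrow> nat \<Rightarrow> 's \<Rightarrow> 's \<Rightarrow> real" where
  "nstep T 0 s s' = of_bool (s = s')"
| "nstep T (Suc n) s s' = (\<Sum>u\<in>UNIV. T s u * nstep T n u s')"

text \<open>Fixation probability of the mutant in layer 2: the probability of eventually reaching
  a state with layer 2 all mutants. Since that set is absorbing for layer 2, this is the
  limit of the probability of being in it at time t.\<close>
definition rho2 :: "real \<Rightarrow> real \<Rightarrow> real \<Rightarrow> ('n::finite \<Rightarrow> 'n \<Rightarrow> real) \<Rightarrow> ('n \<Rightarrow> 'n \<Rightarrow> real) \<Rightarrow> real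
     \<Rightarrow> 'n state \<Rightarrow> real" where
  "rho2 b c r w1 w2 \<delta> \<xi> =
     lim (\<lambda>t. \<Sum>s'\<in>{s'. \<forall>i. snd s' i}. nstep (trans b c r w1 w2 \<delta>) t \<xi> s')"

definition beta_sys :: "('n::finite \<Rightarrow> 'n \<Rightarrow> real) \<Rightarrow> ('n \<Rightarrow> bool) \<Rightarrow> ('n \<Rightarrow> 'n \<Rightarrow> real) \<Rightarrow> bool" where
  "beta_sys w2 x2 \<beta> \<longleftrightarrow>
     (\<forall>i. \<beta> i i = real CARD('n) * (of_bool (x2 i) - hat w2 x2)
                 + (\<Sum>k\<in>UNIV. tprob w2 i k * \<beta> k k))
   \<and> (\<forall>i j. i \<noteq> j \<longrightarrow> \<beta> i j = real CARD('n) / 2 * (of_bool (x2 i) * of_bool (x2 j) - hat w2 x2)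
                 + 1/2 * (\<Sum>k\<in>UNIV. tprob w2 i k * \<beta> k j)
                 + 1/2 * (\<Sum>k\<in>UNIV. tprob w2 j k * \<beta> i k))
   \<and> (\<Sum>i\<in>UNIV. sdist w2 i * \<beta> i i) = 0"

definition betaT :: "('n::finite \<Rightarrow> 'n \<Rightarrow> real) \<Rightarrow> ('n \<Rightarrow> bool) \<Rightarrow> 'n \<Rightarrow> 'n \<Rightarrow> real" where
  "betaT w2 x2 = (THE \<beta>. beta_sys w2 x2 \<beta>)"

definition gamma_sys :: "('n::finite \<Rightarrow> 'n \<Rightarrow> real) \<Rightarrow> ('n \<Rightarrow> 'n \<Rightarrow> real) \<Rightarrow> 'n state
     \<Rightarrow> ('n \<Rightarrow> 'n \<Rightarrow> real) \<Rightarrow> bool" where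
  "gamma_sys w1 w2 \<xi> \<gamma> \<longleftrightarrow>
     (\<forall>i j. \<gamma> i j =
        real CARD('n) ^ 2 / (2 * real CARD('n) - 1) *
          (of_bool (snd \<xi> i) * of_bool (fst \<xi> j) - hat w1 (fst \<xi>) * hat w2 (snd \<xi>))
      + 1 / (2 * real CARD('n) - 1) *
          (\<Sum>k1\<in>UNIV. \<Sum>k2\<in>UNIV. tprob w2 i k1 * tprob w1 j k2 * \<gamma> k1 k2)
      + (real CARD('n) - 1) / (2 * real CARD('n) - 1) *
          ((\<Sum>k\<in>UNIV. tprob w2 i k * \<gamma> k j) + (\<Sum>k\<in>UNIV. tprob w1 j k * \<gamma> i k)))
   \<and> (\<Sum>i\<in>UNIV. sdist w2 i * \<gamma> i i) = 0"

definition gammaT :: "('n::finite \<Rightarrow> 'n \<Rightarrow> real) \<Rightarrow> ('n \<Rightarrow> 'n \<Rightarrow> real) \<Rightarrow> 'n state \<Rightarrow> 'n \<Rightarrow> 'n \<Rightarrow> real" where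
  "gammaT w1 w2 \<xi> = (THE \<gamma>. gamma_sys w1 w2 \<xi> \<gamma>)"

definition thetaT :: "('n::finite \<Rightarrow> 'n \<Rightarrow> real) \<Rightarrow> ('n \<Rightarrow> bool) \<Rightarrow> nat \<Rightarrow> real" where
  "thetaT w2 x2 n = (\<Sum>i\<in>UNIV. \<Sum>j\<in>UNIV. sdist w2 i * mpow (tprob w2) n i j * betaT w2 x2 i j)"

definition phiT :: "('n::finite \<Rightarrow> 'n \<Rightarrow> real) \<Rightarrow> ('n \<Rightarrow> 'n \<Rightarrow> real) \<Rightarrow> 'n state \<Rightarrow> nat \<Rightarrow> nat \<Rightarrow> real" where
  "phiT w1 w2 \<xi> n m = (\<Sum>i\<in>UNIV. \<Sum>j\<in>UNIV. sdist w2 i *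
      (\<Sum>k\<in>UNIV. mpow (tprob w2) n i k * mpow (tprob w1) m k j) * gammaT w1 w2 \<xi> i j)"

definition monomorphic :: "('n \<Rightarrow> bool) \<Rightarrow> bool" where
  "monomorphic x \<longleftrightarrow> (\<forall>i. x i) \<or> (\<forall>i. \<not> x i)"

end

theory Submission
  imports Defs "HOL-Analysis.Analysis"
begin

text \<open>
  Let \<open>X(s)\<close> be the \<open>\<pi>\<close>-weighted mutant frequency \<^term>\<open>hat w2 (snd s)\<close> of layer 2. In the
  neutral chain (\<open>\<delta> = 0\<close>) \<open>X\<close> is a martingale and the chain is absorbed in a state where both
  layers are monomorphic, so the fixation probability is \<open>\<rho>(0, s) = X(s)\<close>. For every small
  \<open>\<delta>\<close> the fixation probability is harmonic for the transition matrix \<open>T\<^sub>\<delta>\<close>. Hence if \<open>\<psi>\<close>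
  solves the Poisson equation \<open>\<psi> - T\<^sub>0 \<psi> = D\<close>, where \<open>D(s)\<close> is the derivative at \<open>\<delta> = 0\<close>
  of the expected one-step change of \<open>X\<close>, the error \<open>\<rho>(\<delta>) - X - \<delta> \<psi>\<close> solves a linear system
  with right-hand side \<open>o(\<delta>)\<close> whose operator is close to the neutral chain with frozen absorbing
  states. That operator is injective, because every state reaches an absorbing one, so its
  inverse is bounded and \<open>\<rho>'(0) = \<psi>\<close>.

  The Poisson equation is solved with the systems defining \<open>\<beta>\<close> and \<open>\<gamma>\<close>. They are uniquely
  solvable by maximum principles on the connected graphs, and one neutral step lowers \<open>\<beta>\<^sub>i\<^sub>j\<close>
  by \<open>x\<^sub>i x\<^sub>j - X\<close> and \<open>\<gamma>\<^sub>i\<^sub>j\<close> by the analogous centred product of a layer-2 and a layer-1 type.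
  As \<open>D\<close> is a covariance of payoffs and layer-2 types along two-step random walks, this gives
  \<open>\<psi> = (-(r - 1) \<theta>\<^sub>2 + c \<phi>\<^sub>2\<^sub>,\<^sub>0 + b (\<phi>\<^sub>0\<^sub>,\<^sub>1 - \<phi>\<^sub>2\<^sub>,\<^sub>1)) / N\<close>.
\<close>

section \<open>Averages and injective linear operators\<close>

lemma convex_comb_le:
  fixes p v :: "'a \<Rightarrow> real"
  assumes "finite A" "\<And>k. k \<in> A \<Longrightarrow> p k \<ge> 0" "sum p A = 1" "\<And>k. k \<in> A \<Longrightarrow> v k \<le> M"
  shows "(\<Sum>k\<in>A. p k * v k) \<le> M"
proof -
  have "(\<Sum>k\<in>A. p k * v k) \<le> (\<Sum>k\<in>A. p k * M)"
    by (rule sum_mono) (use assms in \<open>auto intro: mult_left_mono\<close>)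
  also have "\<dots> = M" using assms by (simp add: sum_distrib_right[symmetric])
  finally show ?thesis .
qed

lemma convex_comb_eq_max:
  fixes p v :: "'a \<Rightarrow> real"
  assumes "finite A" "\<And>k. k \<in> A \<Longrightarrow> p k \<ge> 0" "sum p A = 1" "\<And>k. k \<in> A \<Longrightarrow> v k \<le> M"
    and "(\<Sum>k\<in>A. p k * v k) = M" "k \<in> A" "p k > 0"
  shows "v k = M"
proof -
  have "(\<Sum>k\<in>A. p k * (M - v k)) = (\<Sum>k\<in>A. p k * M) - (\<Sum>k\<in>A. p k * v k)"
    by (simp only: right_diff_distrib sum_subtractf)
  also have "(\<Sum>k\<in>A. p k * M) = M" using assms(3) by (simp add: sum_distrib_right[symmetric])
  finally have "(\<Sum>k\<in>A. p k * (M - v k)) = 0" using assms(5) by simp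
  moreover have nonneg: "p k * (M - v k) \<ge> 0" if "k \<in> A" for k
    using assms(2,4) that by simp
  ultimately have "\<forall>k\<in>A. p k * (M - v k) = 0" using sum_nonneg_eq_0_iff[OF assms(1) nonneg] by simp
  then have "p k * (M - v k) = 0" using assms(6) by blast
  then show ?thesis using assms(7) by simp
qed

lemma finite_UNIV_has_max:
  fixes v :: "'a::finite \<Rightarrow> 'b::linorder"
  obtains a where "\<And>x. v x \<le> v a"
proof -
  have "Max (range v) \<in> range v" by (rule Max_in) auto
  then obtain a where a: "v a = Max (range v)" by (metis imageE)
  show ?thesis
  proof (rule that)
    show "v x \<le> v a" for x unfolding a by (rule Max_ge) auto
  qed
qed

lemma has_real_derivative_at_0_right_quotient:
  assumes "(f has_real_derivative D) (at 0)"
  shows "((\<lambda>y. (f y - f 0) / y) \<longlongrightarrow> D) (at_right 0)"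
  using has_field_derivative_at_within[OF assms, of "{0<..}"] unfolding has_field_derivative_iff by simp

lemma has_real_derivative_at_0_right_continuous:
  assumes "(f has_real_derivative D) (at 0)"
  shows "(f \<longlongrightarrow> f 0) (at_right 0)"
  using DERIV_continuous[OF has_field_derivative_at_within[OF assms, of "{0<..}"]]
  unfolding continuous_within .

lemma DERIV_if_const:
  "(f has_real_derivative D) F \<Longrightarrow> ((\<lambda>x. if C then f x else 0) has_real_derivative (if C then D else 0)) F"
  by (cases C) auto

lemma sum_UNIV_prod: "(\<Sum>u\<in>UNIV. f u) = (\<Sum>a\<in>UNIV. \<Sum>b\<in>UNIV. f (a, b) :: real)"
proof -
  have "(\<Sum>u\<in>UNIV. f u) = (\<Sum>u\<in>UNIV \<times> UNIV. f u)" by (simp only: UNIV_Times_UNIV)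
  also have "\<dots> = (\<Sum>a\<in>UNIV. \<Sum>b\<in>UNIV. f (a, b))" by (rule sum.cartesian_product')
  finally show ?thesis .
qed

lemma sum_sum_product:
  "(\<Sum>a\<in>A. \<Sum>b\<in>B. f a b) * (\<Sum>k\<in>C. \<Sum>l\<in>D. g k l)
   = (\<Sum>a\<in>A. \<Sum>b\<in>B. \<Sum>k\<in>C. \<Sum>l\<in>D. (f a b * g k l :: real))"
  unfolding sum_distrib_right by (simp only: sum_distrib_left)

lemma sum_fun_upd:
  fixes f :: "'a::finite \<Rightarrow> real"
  shows "(\<Sum>i\<in>UNIV. f i * g ((h(k := v)) i)) = (\<Sum>i\<in>UNIV. f i * g (h i)) + f k * (g v - g (h k))"
proof -
  have "(\<Sum>i\<in>UNIV. f i * g ((h(k := v)) i)) = f k * g v + (\<Sum>i\<in>UNIV - {k}. f i * g (h i))"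
    by (simp add: sum.remove[of UNIV k])
  moreover have "(\<Sum>i\<in>UNIV. f i * g (h i)) = f k * g (h k) + (\<Sum>i\<in>UNIV - {k}. f i * g (h i))"
    by (simp add: sum.remove[of UNIV k])
  ultimately show ?thesis by (simp add: algebra_simps)
qed

lemma sum_UNIV_if_eq:
  "(\<Sum>k\<in>(UNIV::'a::finite set). if k = i then a else b) = a + (real CARD('a) - 1) * (b::real)"
proof -
  have "(\<Sum>k\<in>(UNIV::'a set). if k = i then a else b) = a + (\<Sum>k\<in>UNIV - {i}. b)"
    by (simp add: sum.remove[of UNIV i])
  also have "(\<Sum>k\<in>(UNIV::'a set) - {i}. b) = (real CARD('a) - 1) * b"
    by (simp add: card_Diff_singleton of_nat_diff)
  finally show ?thesis .
qed

lemma sum_UNIV_if_eq2: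
  assumes "i \<noteq> j"
  shows "(\<Sum>k\<in>(UNIV::'a::finite set). if k = i then a else if k = j then b else c)
    = a + b + (real CARD('a) - 2) * (c::real)"
proof -
  have "(\<Sum>k\<in>(UNIV::'a set). if k = i then a else if k = j then b else c)
      = a + (\<Sum>k\<in>UNIV - {i}. if k = j then b else c)"
    by (simp add: sum.remove[of UNIV i])
  also have "(\<Sum>k\<in>UNIV - {i}. if k = j then b else c) = b + (\<Sum>k\<in>UNIV - {i} - {j}. c)"
    using assms by (subst sum.remove[of _ j]) auto
  also have "(\<Sum>k\<in>(UNIV::'a set) - {i} - {j}. c) = (real CARD('a) - 2) * c"
  proof -
    have "card {i, j} \<le> CARD('a)" by (rule card_mono) auto
    then have "CARD('a) \<ge> 2" using assms by simp
    moreover have "card ((UNIV::'a set) - {i} - {j}) = CARD('a) - 2"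
      using assms by (simp add: card_Diff_singleton)
    ultimately show ?thesis by (simp add: of_nat_diff)
  qed
  finally show ?thesis by simp
qed

definition op_vec :: "(('a::finite \<Rightarrow> real) \<Rightarrow> ('a \<Rightarrow> real)) \<Rightarrow> real^'a \<Rightarrow> real^'a" where
  "op_vec L y = (\<chi> a. L (vec_nth y) a)"

locale injective_linear_op =
  fixes L :: "('a::finite \<Rightarrow> real) \<Rightarrow> ('a \<Rightarrow> real)"
  assumes op_add: "\<And>u v. L (\<lambda>x. u x + v x) = (\<lambda>x. L u x + L v x)"
    and op_scale: "\<And>c u. L (\<lambda>x. c * u x) = (\<lambda>x. c * L u x)"
    and op_kernel: "\<And>u. L u = (\<lambda>_. 0) \<Longrightarrow> u = (\<lambda>_. 0)"
begin

lemma op_diff: "L (\<lambda>x. u x - v x) = (\<lambda>x. L u x - L v x)"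
  using op_add[of u "\<lambda>x. -1 * v x"] op_scale[of "-1" v] by simp

lemma op_cancel: "L u = L v \<Longrightarrow> u = v"
  using op_kernel[of "\<lambda>x. u x - v x"] by (simp add: op_diff fun_eq_iff)

lemma op_lin_comb:
  assumes "finite A"
  shows "L (\<lambda>p. \<Sum>q\<in>A. c q * f q p) = (\<lambda>p. \<Sum>q\<in>A. c q * L (f q) p)"
  using assms
proof (induction A rule: finite_induct)
  case empty
  show ?case using op_scale[of 0 "\<lambda>_. 0"] by simp
next
  case (insert a F)
  then show ?case
    using op_add[of "\<lambda>p. c a * f a p" "\<lambda>p. \<Sum>q\<in>F. c q * f q p"] op_scale[of "c a" "f a"]
    by simp
qed

lemma linear_op_vec: "linear (op_vec L)"
proof (rule linearI)
  fix y z :: "real^'a"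
  have "vec_nth (y + z) = (\<lambda>a. vec_nth y a + vec_nth z a)" by (rule ext) simp
  then show "op_vec L (y + z) = op_vec L y + op_vec L z"
    unfolding op_vec_def by (simp add: op_add vec_eq_iff)
next
  fix c and y :: "real^'a"
  have "vec_nth (c *\<^sub>R y) = (\<lambda>a. c * vec_nth y a)" by (rule ext) simp
  then show "op_vec L (c *\<^sub>R y) = c *\<^sub>R op_vec L y"
    unfolding op_vec_def by (simp add: op_scale vec_eq_iff)
qed

lemma inj_op_vec: "inj (op_vec L)"
  unfolding linear_injective_0[OF linear_op_vec]
proof (intro allI impI)
  fix y :: "real^'a"
  assume "op_vec L y = 0"
  then have "L (vec_nth y) = (\<lambda>_. 0)" unfolding op_vec_def by (simp add: vec_eq_iff fun_eq_iff)
  then show "y = 0" using op_kernel by (simp add: vec_eq_iff fun_eq_iff)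
qed

lemma op_surj: "\<exists>u. L u = f"
proof -
  have "surj (op_vec L)"
    by (rule linear_injective_imp_surjective[OF linear_op_vec inj_op_vec]) simp
  then obtain y where "op_vec L y = (\<chi> a. f a)" by (metis surjD)
  then have "L (vec_nth y) = f" unfolding op_vec_def by (simp add: vec_eq_iff fun_eq_iff)
  then show ?thesis by blast
qed

lemma op_bounded_below: "\<exists>C>0. \<forall>u a. \<bar>u a\<bar> \<le> C * (\<Sum>b\<in>UNIV. \<bar>L u b\<bar>)"
proof -
  obtain B where B: "B > 0" "\<And>y. B * norm y \<le> norm (op_vec L y)"
    using linear_inj_bounded_below_pos[OF linear_op_vec inj_op_vec] by blast
  have "\<bar>u a\<bar> \<le> (1/B) * (\<Sum>b\<in>UNIV. \<bar>L u b\<bar>)" for u a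
  proof -
    define y where "y = (\<chi> a. u a)"
    have uy: "vec_nth y = u" unfolding y_def by (rule ext) simp
    have "\<bar>u a\<bar> = \<bar>y $ a\<bar>" unfolding y_def by simp
    also have "\<dots> \<le> norm y" by (rule component_le_norm_cart)
    also have "\<dots> \<le> (1/B) * norm (op_vec L y)" using B by (simp add: field_simps)
    also have "norm (op_vec L y) \<le> (\<Sum>b\<in>UNIV. \<bar>op_vec L y $ b\<bar>)" by (rule norm_le_l1_cart)
    also have "(\<Sum>b\<in>UNIV. \<bar>op_vec L y $ b\<bar>) = (\<Sum>b\<in>UNIV. \<bar>L u b\<bar>)"
      unfolding op_vec_def uy by simp
    finally show ?thesis using B(1) by (simp add: divide_right_mono)
  qed
  then show ?thesis using B(1) by (intro exI[of _ "1/B"]) auto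
qed

end

section \<open>Random walks on connected weighted graphs\<close>

locale connected_graph =
  fixes w :: "'n::finite \<Rightarrow> 'n \<Rightarrow> real"
  assumes graph_ok: "graph_ok w" and two_individuals: "CARD('n) \<ge> 2"
begin

abbreviation "P \<equiv> tprob w"
abbreviation "\<pi> \<equiv> sdist w"

lemma weight_sym: "w i j = w j i" and weight_nonneg: "w i j \<ge> 0"
  and weight_connected: "(i, j) \<in> {(a, b). w a b > 0}\<^sup>*"
  using graph_ok unfolding graph_ok_def by auto

lemma exists_neighbour: "\<exists>k. w i k > 0"
proof -
  have "\<not> UNIV \<subseteq> {i}"
    using two_individuals card_mono[of "{i}" UNIV] by auto
  then obtain j where "j \<noteq> i" by blast
  with weight_connected[of i j] show ?thesis
    by (induction rule: converse_rtrancl_induct) auto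
qed

lemma strength_pos: "strength w i > 0"
proof -
  obtain k where k: "w i k > 0" using exists_neighbour by blast
  have "w i k \<le> (\<Sum>j\<in>UNIV. w i j)" by (rule member_le_sum) (auto simp: weight_nonneg)
  with k show ?thesis unfolding strength_def by simp
qed

lemma P_nonneg: "P i j \<ge> 0"
  unfolding tprob_def using strength_pos[of i] weight_nonneg[of i j] by simp

lemma P_row_sum: "(\<Sum>j\<in>UNIV. P i j) = 1"
  unfolding tprob_def using strength_pos[of i]
  by (simp add: sum_divide_distrib[symmetric] strength_def)

lemma P_pos_iff: "P i j > 0 \<longleftrightarrow> w i j > 0"
  unfolding tprob_def using strength_pos[of i] by (simp add: zero_less_divide_iff)

lemma P_connected: "(i, j) \<in> {(a, b). P a b > 0}\<^sup>*"
  using weight_connected[of i j] by (simp add: P_pos_iff)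

lemma pi_sum: "(\<Sum>i\<in>UNIV. \<pi> i) = 1"
proof -
  have "(\<Sum>k\<in>UNIV. strength w k) > 0" using strength_pos by (simp add: sum_pos)
  then show ?thesis unfolding sdist_def by (simp add: sum_divide_distrib[symmetric])
qed

lemma reversible: "\<pi> i * P i j = \<pi> j * P j i"
  unfolding sdist_def tprob_def using strength_pos[of i] strength_pos[of j] weight_sym[of i j]
  by simp

lemma stationary: "(\<Sum>i\<in>UNIV. \<pi> i * P i j) = \<pi> j"
proof -
  have "(\<Sum>i\<in>UNIV. \<pi> i * P i j) = (\<Sum>i\<in>UNIV. \<pi> j * P j i)" by (simp add: reversible)
  also have "\<dots> = \<pi> j" by (simp add: sum_distrib_left[symmetric] P_row_sum)
  finally show ?thesis .
qed

lemma stationary_avg: "(\<Sum>i\<in>UNIV. \<pi> i * (\<Sum>k\<in>UNIV. P i k * f k)) = (\<Sum>k\<in>UNIV. \<pi> k * f k)"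
proof -
  have "(\<Sum>i\<in>UNIV. \<pi> i * (\<Sum>k\<in>UNIV. P i k * f k)) = (\<Sum>k\<in>UNIV. \<Sum>i\<in>UNIV. \<pi> i * P i k * f k)"
    by (simp add: sum_distrib_left mult.assoc) (rule sum.swap)
  also have "\<dots> = (\<Sum>k\<in>UNIV. \<pi> k * f k)" by (simp only: sum_distrib_right[symmetric] stationary)
  finally show ?thesis .
qed

lemma harmonic_imp_const:
  assumes harmonic: "\<And>i. v i = (\<Sum>j\<in>UNIV. P i j * v j)"
  shows "v i = v j"
proof -
  obtain a where max: "\<And>x. v x \<le> v a" using finite_UNIV_has_max by blast
  have "v k = v a" for k
    using P_connected[of a k]
  proof (induction rule: rtrancl_induct)
    case (step y z)
    show ?case
      by (rule convex_comb_eq_max[of UNIV "P y" v "v a"])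
        (use step harmonic[of y] max in \<open>auto simp: P_nonneg P_row_sum\<close>)
  qed simp
  then show ?thesis by (metis (no_types))
qed

lemma mpow_row_sum: "(\<Sum>j\<in>UNIV. mpow P n i j) = 1"
proof (induction n arbitrary: i)
  case (Suc n)
  have "(\<Sum>j\<in>UNIV. mpow P (Suc n) i j) = (\<Sum>k\<in>UNIV. P i k * (\<Sum>j\<in>UNIV. mpow P n k j))"
    by (simp add: sum_distrib_left) (rule sum.swap)
  then show ?case using Suc by (simp add: P_row_sum)
qed simp

lemma mpow_stationary: "(\<Sum>i\<in>UNIV. \<pi> i * mpow P n i j) = \<pi> j"
proof (induction n arbitrary: j)
  case (Suc n)
  have "(\<Sum>i\<in>UNIV. \<pi> i * mpow P (Suc n) i j) = (\<Sum>k\<in>UNIV. (\<Sum>i\<in>UNIV. \<pi> i * P i k) * mpow P n k j)"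
    by (simp add: sum_distrib_left sum_distrib_right mult.assoc) (rule sum.swap)
  then show ?case using Suc by (simp add: stationary)
qed simp

lemma mpow_2: "mpow P 2 i j = (\<Sum>k\<in>UNIV. P i k * P k j)"
  by (simp add: numeral_2_eq_2)

lemma mpow_2_reversible: "\<pi> i * mpow P 2 i j = \<pi> j * mpow P 2 j i"
proof -
  have "(\<pi> i * P i k) * P k j = (\<pi> j * P j k) * P k i" for k
  proof -
    have "(\<pi> i * P i k) * P k j = P k i * (\<pi> k * P k j)" by (simp only: reversible[of i k] mult_ac)
    also have "\<dots> = (\<pi> j * P j k) * P k i" by (simp only: reversible[of k j] mult_ac)
    finally show ?thesis .
  qed
  then show ?thesis by (simp add: mpow_2 sum_distrib_left mult.assoc)
qed

lemma stationary_two_step: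
  "(\<Sum>k\<in>UNIV. \<pi> k * ((\<Sum>m\<in>UNIV. P k m * f m) * (\<Sum>l\<in>UNIV. P k l * g l)))
   = (\<Sum>m\<in>UNIV. \<Sum>l\<in>UNIV. \<pi> m * mpow P 2 m l * f m * g l)"
proof -
  have "(\<Sum>k\<in>UNIV. \<pi> k * ((\<Sum>m\<in>UNIV. P k m * f m) * (\<Sum>l\<in>UNIV. P k l * g l)))
      = (\<Sum>k\<in>UNIV. \<Sum>l\<in>UNIV. \<Sum>m\<in>UNIV. (\<pi> k * P k m) * P k l * f m * g l)"
    by (simp add: sum_product sum_distrib_left mult_ac)
  also have "\<dots> = (\<Sum>l\<in>UNIV. \<Sum>m\<in>UNIV. \<Sum>k\<in>UNIV. (\<pi> k * P k m) * P k l * f m * g l)"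
    by (subst sum.swap) (rule sum.cong[OF refl], rule sum.swap)
  also have "\<dots> = (\<Sum>l\<in>UNIV. \<Sum>m\<in>UNIV. (\<pi> m * (\<Sum>k\<in>UNIV. P m k * P k l)) * f m * g l)"
    by (simp add: reversible sum_distrib_left sum_distrib_right mult_ac)
  also have "\<dots> = (\<Sum>m\<in>UNIV. \<Sum>l\<in>UNIV. \<pi> m * mpow P 2 m l * f m * g l)"
    by (subst sum.swap) (simp add: mpow_2)
  finally show ?thesis .
qed

lemma coalescing_harmonic_nonpos:
  assumes diag: "\<And>i. v i i = 0"
    and harmonic: "\<And>i j. i \<noteq> j \<Longrightarrow> v i j = 1/2 * (\<Sum>k\<in>UNIV. P i k * v k j) + 1/2 * (\<Sum>k\<in>UNIV. P j k * v i k)"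
  shows "v i j \<le> 0"
proof (rule ccontr)
  assume "\<not> v i j \<le> 0"
  obtain ab where max: "\<And>x. case_prod v x \<le> case_prod v ab" using finite_UNIV_has_max by blast
  obtain a b where ab: "ab = (a, b)" by (cases ab)
  define M where "M = v a b"
  have le: "v x y \<le> M" for x y using max[of "(x, y)"] unfolding ab M_def by simp
  have M_pos: "M > 0" using le[of i j] \<open>\<not> v i j \<le> 0\<close> by simp
  \<comment> \<open>Moving the first walker along edges keeps the maximum, until it meets the second.\<close>
  have "v x b = M" if "(a, x) \<in> {(a, b). P a b > 0}\<^sup>*" for x
    using that
  proof (induction rule: rtrancl_induct)
    case (step y z)
    have "y \<noteq> b" using step.IH diag[of b] M_pos by auto
    define A where "A = (\<Sum>k\<in>UNIV. P y k * v k b)"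
    define B where "B = (\<Sum>k\<in>UNIV. P b k * v y k)"
    have "A \<le> M" unfolding A_def by (rule convex_comb_le) (auto simp: P_nonneg P_row_sum le)
    moreover have "B \<le> M" unfolding B_def by (rule convex_comb_le) (auto simp: P_nonneg P_row_sum le)
    moreover have "M = 1/2 * A + 1/2 * B"
      using harmonic[OF \<open>y \<noteq> b\<close>] step.IH unfolding A_def B_def by simp
    ultimately have "A = M" by linarith
    then show ?case
      by (intro convex_comb_eq_max[of UNIV "P y" "\<lambda>k. v k b" M])
        (use step.hyps(2) in \<open>auto simp: P_nonneg P_row_sum le A_def\<close>)
  qed (simp add: M_def)
  from this[OF P_connected[of a b]] diag[of b] M_pos show False by simp
qed

lemma coalescing_harmonic_zero:
  assumes diag: "\<And>i. v i i = 0"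
    and harmonic: "\<And>i j. i \<noteq> j \<Longrightarrow> v i j = 1/2 * (\<Sum>k\<in>UNIV. P i k * v k j) + 1/2 * (\<Sum>k\<in>UNIV. P j k * v i k)"
  shows "v i j = 0"
proof -
  have "v i j \<le> 0" by (rule coalescing_harmonic_nonpos[OF diag harmonic])
  moreover have "- v i j \<le> 0"
  proof (rule coalescing_harmonic_nonpos[of "\<lambda>i j. - v i j"])
    fix i j :: 'n
    assume "i \<noteq> j"
    then show "- v i j = 1/2 * (\<Sum>k\<in>UNIV. P i k * - v k j) + 1/2 * (\<Sum>k\<in>UNIV. P j k * - v i k)"
      using harmonic[of i j] by (simp add: sum_negf)
  qed (simp add: diag)
  ultimately show ?thesis by simp
qed

end

locale connected_graph_pair = g1: connected_graph w1 + g2: connected_graph w2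
  for w1 w2 :: "'n::finite \<Rightarrow> 'n \<Rightarrow> real"
begin

lemma N_ge_2: "real CARD('n) \<ge> 2" using g1.two_individuals by simp

definition pair_avg :: "('n \<Rightarrow> 'n \<Rightarrow> real) \<Rightarrow> 'n \<Rightarrow> 'n \<Rightarrow> real" where
  "pair_avg v i j = 1 / (2 * real CARD('n) - 1) * (\<Sum>k1\<in>UNIV. \<Sum>k2\<in>UNIV. g2.P i k1 * g1.P j k2 * v k1 k2)
      + (real CARD('n) - 1) / (2 * real CARD('n) - 1) * ((\<Sum>k\<in>UNIV. g2.P i k * v k j) + (\<Sum>k\<in>UNIV. g1.P j k * v i k))"

lemma pair_avg_weights: "1 / (2 * real CARD('n) - 1) + 2 * ((real CARD('n) - 1) / (2 * real CARD('n) - 1)) = 1"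
  using N_ge_2 by (simp add: field_simps)

lemma pair_avg_max_propagates:
  assumes fixed: "\<And>i j. v i j = pair_avg v i j" and le: "\<And>x y. v x y \<le> M" and "v i j = M"
  shows "g2.P i k > 0 \<Longrightarrow> v k j = M" and "g1.P j k > 0 \<Longrightarrow> v i k = M"
proof -
  define c1 where "c1 = 1 / (2 * real CARD('n) - 1)"
  define c2 where "c2 = (real CARD('n) - 1) / (2 * real CARD('n) - 1)"
  define A1 where "A1 = (\<Sum>k1\<in>UNIV. g2.P i k1 * (\<Sum>k2\<in>UNIV. g1.P j k2 * v k1 k2))"
  define A2 where "A2 = (\<Sum>k\<in>UNIV. g2.P i k * v k j)"
  define A3 where "A3 = (\<Sum>k\<in>UNIV. g1.P j k * v i k)"
  have c_pos: "c1 > 0" "c2 > 0" unfolding c1_def c2_def using N_ge_2 by auto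
  have inner: "(\<Sum>k2\<in>UNIV. g1.P j k2 * v k1 k2) \<le> M" for k1
    by (rule convex_comb_le) (auto simp: g1.P_nonneg g1.P_row_sum le)
  have "A1 \<le> M" unfolding A1_def by (rule convex_comb_le) (auto simp: g2.P_nonneg g2.P_row_sum inner)
  moreover have "A2 \<le> M" unfolding A2_def by (rule convex_comb_le) (auto simp: g2.P_nonneg g2.P_row_sum le)
  moreover have "A3 \<le> M" unfolding A3_def by (rule convex_comb_le) (auto simp: g1.P_nonneg g1.P_row_sum le)
  moreover have "M = c1 * A1 + c2 * A2 + c2 * A3"
    using fixed[of i j] \<open>v i j = M\<close> unfolding pair_avg_def A1_def A2_def A3_def c1_def c2_def
    by (simp add: distrib_left sum_distrib_left mult.assoc)
  moreover have "c1 * M + c2 * M + c2 * M = M"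
    using pair_avg_weights unfolding c1_def c2_def by (metis distrib_right mult_2 mult_1 add.assoc)
  ultimately have "c2 * A2 \<ge> c2 * M" "c2 * A3 \<ge> c2 * M"
    using c_pos mult_left_mono[of _ M c1] mult_left_mono[of _ M c2] by (smt (verit))+
  then have "A2 = M" "A3 = M" using c_pos \<open>A2 \<le> M\<close> \<open>A3 \<le> M\<close> by simp_all
  show "g2.P i k > 0 \<Longrightarrow> v k j = M"
    by (rule convex_comb_eq_max[of UNIV "g2.P i" "\<lambda>k. v k j" M])
      (use \<open>A2 = M\<close> in \<open>auto simp: g2.P_nonneg g2.P_row_sum le A2_def\<close>)
  show "g1.P j k > 0 \<Longrightarrow> v i k = M"
    by (rule convex_comb_eq_max[of UNIV "g1.P j" "\<lambda>k. v i k" M])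
      (use \<open>A3 = M\<close> in \<open>auto simp: g1.P_nonneg g1.P_row_sum le A3_def\<close>)
qed

lemma pair_avg_fixed_imp_const:
  assumes fixed: "\<And>i j. v i j = pair_avg v i j"
  shows "v i j = v i' j'"
proof -
  obtain ab where max: "\<And>x. case_prod v x \<le> case_prod v ab" using finite_UNIV_has_max by blast
  obtain a b where ab: "ab = (a, b)" by (cases ab)
  define M where "M = v a b"
  have le: "v x y \<le> M" for x y using max[of "(x, y)"] unfolding ab M_def by simp
  have column: "v x b = M" for x
    using g2.P_connected[of a x]
  proof (induction rule: rtrancl_induct)
    case (step y z) then show ?case using pair_avg_max_propagates(1)[OF fixed le, of y b z] by simp
  qed (simp add: M_def)
  have "v x y = M" for x y
    using g1.P_connected[of b y]
  proof (induction rule: rtrancl_induct)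
    case (step y z) then show ?case using pair_avg_max_propagates(2)[OF fixed le, of x y z] by simp
  qed (rule column)
  then show ?thesis by simp
qed

end

section \<open>The coalescence systems and one neutral step\<close>

context connected_graph
begin

text \<open>The normalisation \<open>\<Sum>\<^sub>i \<pi>\<^sub>i \<beta>\<^sub>i\<^sub>i = 0\<close> is folded into the diagonal equations, which
  makes the system for \<open>\<beta>\<close> square.\<close>

definition beta_op :: "('n \<times> 'n \<Rightarrow> real) \<Rightarrow> ('n \<times> 'n \<Rightarrow> real)" where
  "beta_op v = (\<lambda>(i, j). if i = j
     then v (i, i) - (\<Sum>k\<in>UNIV. P i k * v (k, k)) + (\<Sum>k\<in>UNIV. \<pi> k * v (k, k))
     else v (i, j) - 1/2 * (\<Sum>k\<in>UNIV. P i k * v (k, j)) - 1/2 * (\<Sum>k\<in>UNIV. P j k * v (i, k)))"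

definition beta_rhs :: "('n \<Rightarrow> bool) \<Rightarrow> ('n \<times> 'n \<Rightarrow> real)" where
  "beta_rhs x = (\<lambda>(i, j). if i = j then real CARD('n) * (of_bool (x i) - hat w x)
     else real CARD('n) / 2 * (of_bool (x i) * of_bool (x j) - hat w x))"

lemma stationary_beta_op: "(\<Sum>i\<in>UNIV. \<pi> i * beta_op v (i, i)) = (\<Sum>k\<in>UNIV. \<pi> k * v (k, k))"
proof -
  have "(\<Sum>i\<in>UNIV. \<pi> i * beta_op v (i, i))
      = (\<Sum>i\<in>UNIV. \<pi> i * v (i, i)) - (\<Sum>i\<in>UNIV. \<pi> i * (\<Sum>k\<in>UNIV. P i k * v (k, k)))
        + (\<Sum>i\<in>UNIV. \<pi> i) * (\<Sum>k\<in>UNIV. \<pi> k * v (k, k))"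
    unfolding beta_op_def
    by (simp add: right_diff_distrib distrib_left sum.distrib sum_subtractf sum_distrib_right)
  then show ?thesis by (simp only: stationary_avg pi_sum mult_1 diff_self add_0_left)
qed

lemma stationary_beta_rhs: "(\<Sum>i\<in>UNIV. \<pi> i * beta_rhs x (i, i)) = 0"
proof -
  have "(\<Sum>i\<in>UNIV. \<pi> i * beta_rhs x (i, i))
      = real CARD('n) * ((\<Sum>i\<in>UNIV. \<pi> i * of_bool (x i)) - (\<Sum>i\<in>UNIV. \<pi> i) * hat w x)"
    unfolding beta_rhs_def
    by (simp add: sum_distrib_left sum_distrib_right right_diff_distrib sum_subtractf algebra_simps
        del: sum_mult_of_bool_eq)
  then show ?thesis by (simp add: pi_sum hat_def)
qed

sublocale beta: injective_linear_op beta_op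
proof
  show "beta_op (\<lambda>p. u p + v p) = (\<lambda>p. beta_op u p + beta_op v p)" for u v
    unfolding beta_op_def by (rule ext) (auto simp: sum.distrib distrib_left)
  show "beta_op (\<lambda>p. c * u p) = (\<lambda>p. c * beta_op u p)" for c u
    unfolding beta_op_def
    by (rule ext) (auto simp: sum_distrib_left right_diff_distrib distrib_left mult.left_commute)
next
  fix v :: "'n \<times> 'n \<Rightarrow> real"
  assume kernel: "beta_op v = (\<lambda>_. 0)"
  define S where "S = (\<Sum>k\<in>UNIV. \<pi> k * v (k, k))"
  have "S = 0" using stationary_beta_op[of v] kernel unfolding S_def by simp
  then have harmonic: "v (i, i) = (\<Sum>k\<in>UNIV. P i k * v (k, k))" for i
    using fun_cong[OF kernel, of "(i, i)"] unfolding beta_op_def S_def by simp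
  have const: "v (i, i) = v (j, j)" for i j
    using harmonic_imp_const[of "\<lambda>i. v (i, i)", OF harmonic] .
  have "S = v (i, i)" for i
  proof -
    have "S = (\<Sum>k\<in>UNIV. \<pi> k * v (i, i))" unfolding S_def using const by metis
    also have "\<dots> = v (i, i)" by (simp add: sum_distrib_right[symmetric] pi_sum)
    finally show ?thesis .
  qed
  then have diag: "v (i, i) = 0" for i using \<open>S = 0\<close> by simp
  have "(\<lambda>i j. v (i, j)) i j = 0" for i j
  proof (rule coalescing_harmonic_zero)
    fix i j :: 'n
    assume "i \<noteq> j"
    then show "v (i, j) = 1/2 * (\<Sum>k\<in>UNIV. P i k * v (k, j)) + 1/2 * (\<Sum>k\<in>UNIV. P j k * v (i, k))"
      using fun_cong[OF kernel, of "(i, j)"] unfolding beta_op_def by simp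
  qed (rule diag)
  then show "v = (\<lambda>_. 0)" by (auto simp: fun_eq_iff)
qed

lemma beta_sys_iff: "beta_sys w x \<beta> \<longleftrightarrow> beta_op (\<lambda>p. \<beta> (fst p) (snd p)) = beta_rhs x"
proof
  assume sys: "beta_sys w x \<beta>"
  have diag: "\<beta> i i = real CARD('n) * (of_bool (x i) - hat w x) + (\<Sum>k\<in>UNIV. P i k * \<beta> k k)" for i
    using sys unfolding beta_sys_def by blast
  have offdiag: "\<beta> i j = real CARD('n) / 2 * (of_bool (x i) * of_bool (x j) - hat w x)
      + 1/2 * (\<Sum>k\<in>UNIV. P i k * \<beta> k j) + 1/2 * (\<Sum>k\<in>UNIV. P j k * \<beta> i k)" if "i \<noteq> j" for i j
    using sys that unfolding beta_sys_def by blast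
  have normalised: "(\<Sum>i\<in>UNIV. \<pi> i * \<beta> i i) = 0"
    using sys unfolding beta_sys_def by blast
  show "beta_op (\<lambda>p. \<beta> (fst p) (snd p)) = beta_rhs x"
  proof (rule ext, clarify)
    fix i j :: 'n
    show "beta_op (\<lambda>p. \<beta> (fst p) (snd p)) (i, j) = beta_rhs x (i, j)"
    proof (cases "i = j")
      case True
      then show ?thesis using diag[of j] normalised unfolding beta_op_def beta_rhs_def by simp
    next
      case False
      then show ?thesis using offdiag[of i j] unfolding beta_op_def beta_rhs_def by simp
    qed
  qed
next
  assume op: "beta_op (\<lambda>p. \<beta> (fst p) (snd p)) = beta_rhs x"
  have normalised: "(\<Sum>k\<in>UNIV. \<pi> k * \<beta> k k) = 0"
    using stationary_beta_op[of "\<lambda>p. \<beta> (fst p) (snd p)"] stationary_beta_rhs[of x] op by simp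
  show "beta_sys w x \<beta>"
    unfolding beta_sys_def
  proof (intro conjI allI impI normalised)
    show "\<beta> i i = real CARD('n) * (of_bool (x i) - hat w x) + (\<Sum>k\<in>UNIV. P i k * \<beta> k k)" for i
      using fun_cong[OF op, of "(i, i)"] normalised unfolding beta_op_def beta_rhs_def by simp
    show "\<beta> i j = real CARD('n) / 2 * (of_bool (x i) * of_bool (x j) - hat w x)
        + 1/2 * (\<Sum>k\<in>UNIV. P i k * \<beta> k j) + 1/2 * (\<Sum>k\<in>UNIV. P j k * \<beta> i k)" if "i \<noteq> j" for i j
      using fun_cong[OF op, of "(i, j)"] that unfolding beta_op_def beta_rhs_def by simp
  qed
qed

lemma beta_sys_ex1: "\<exists>!\<beta>. beta_sys w x \<beta>"
proof -
  obtain v where v: "beta_op v = beta_rhs x" using beta.op_surj by blast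
  show ?thesis
  proof (rule ex1I[of _ "\<lambda>i j. v (i, j)"])
    show "beta_sys w x (\<lambda>i j. v (i, j))" using v by (simp add: beta_sys_iff)
    fix \<beta>
    assume "beta_sys w x \<beta>"
    then have "beta_op (\<lambda>p. \<beta> (fst p) (snd p)) = beta_op v" using v by (simp add: beta_sys_iff)
    then have "(\<lambda>p. \<beta> (fst p) (snd p)) = v" by (rule beta.op_cancel)
    then show "\<beta> = (\<lambda>i j. v (i, j))" by (auto simp: fun_eq_iff)
  qed
qed

lemma betaT_sys: "beta_sys w x (betaT w x)"
  unfolding betaT_def by (rule theI'[OF beta_sys_ex1])

lemma betaT_eqI: "beta_sys w x \<beta> \<Longrightarrow> betaT w x = \<beta>"
  using beta_sys_ex1 betaT_sys by blast

lemma beta_op_betaT: "beta_op (\<lambda>p. betaT w x (fst p) (snd p)) = beta_rhs x"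
  using betaT_sys by (simp add: beta_sys_iff)

definition neutral_avg :: "(('n \<Rightarrow> bool) \<Rightarrow> real) \<Rightarrow> ('n \<Rightarrow> bool) \<Rightarrow> real" where
  "neutral_avg G x = 1 / real CARD('n) * (\<Sum>k\<in>UNIV. \<Sum>l\<in>UNIV. P k l * G (x(k := x l)))"

lemma neutral_avg_const: "neutral_avg (\<lambda>_. c) x = c"
proof -
  have "(\<Sum>k\<in>UNIV. \<Sum>l\<in>UNIV. P k l * c) = (\<Sum>k\<in>(UNIV::'n set). c)"
    by (simp add: sum_distrib_right[symmetric] P_row_sum)
  then show ?thesis unfolding neutral_avg_def by simp
qed

lemma neutral_avg_add: "neutral_avg (\<lambda>y. G y + H y) x = neutral_avg G x + neutral_avg H x"
  unfolding neutral_avg_def by (simp add: distrib_left sum.distrib)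

lemma neutral_avg_scale: "neutral_avg (\<lambda>y. c * G y) x = c * neutral_avg G x"
  unfolding neutral_avg_def by (simp add: sum_distrib_left algebra_simps)

lemma neutral_avg_diff: "neutral_avg (\<lambda>y. G y - H y) x = neutral_avg G x - neutral_avg H x"
  unfolding neutral_avg_def by (simp add: right_diff_distrib sum_subtractf)

lemma neutral_avg_sum: "finite A \<Longrightarrow> neutral_avg (\<lambda>y. \<Sum>i\<in>A. f i y) x = (\<Sum>i\<in>A. neutral_avg (f i) x)"
  by (induction A rule: finite_induct) (simp_all add: neutral_avg_const neutral_avg_add)

lemma neutral_avg_as_sum:
  "neutral_avg G x = (\<Sum>q\<in>UNIV. (1 / real CARD('n) * P (fst q) (snd q)) * G (x(fst q := x (snd q))))"
  unfolding neutral_avg_def by (subst sum_UNIV_prod) (simp add: sum_distrib_left mult.assoc)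

lemma neutral_avg_indicator:
  "neutral_avg (\<lambda>y. of_bool (y i)) x
   = of_bool (x i) + 1 / real CARD('n) * ((\<Sum>l\<in>UNIV. P i l * of_bool (x l)) - of_bool (x i))"
proof -
  have "(\<Sum>k\<in>UNIV. \<Sum>l\<in>UNIV. P k l * of_bool ((x(k := x l)) i))
      = (\<Sum>k\<in>UNIV. if k = i then (\<Sum>l\<in>UNIV. P i l * of_bool (x l)) else of_bool (x i))"
    by (rule sum.cong) (auto simp: sum_distrib_right[symmetric] P_row_sum)
  also have "\<dots> = (\<Sum>l\<in>UNIV. P i l * of_bool (x l)) + (real CARD('n) - 1) * of_bool (x i)"
    by (rule sum_UNIV_if_eq)
  finally show ?thesis unfolding neutral_avg_def by (simp add: field_simps)
qed

lemma neutral_avg_indicator_pair: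
  assumes "i \<noteq> j"
  shows "neutral_avg (\<lambda>y. of_bool (y i) * of_bool (y j)) x
   = of_bool (x i) * of_bool (x j) + 1 / real CARD('n) *
      (((\<Sum>l\<in>UNIV. P i l * of_bool (x l)) - of_bool (x i)) * of_bool (x j)
       + of_bool (x i) * ((\<Sum>l\<in>UNIV. P j l * of_bool (x l)) - of_bool (x j)))"
proof -
  have "(\<Sum>k\<in>UNIV. \<Sum>l\<in>UNIV. P k l * (of_bool ((x(k := x l)) i) * of_bool ((x(k := x l)) j)))
      = (\<Sum>k\<in>UNIV. if k = i then (\<Sum>l\<in>UNIV. P i l * of_bool (x l)) * of_bool (x j)
                   else if k = j then of_bool (x i) * (\<Sum>l\<in>UNIV. P j l * of_bool (x l))
                   else of_bool (x i) * of_bool (x j))"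
    using assms
    by (intro sum.cong)
      (auto simp: sum_distrib_right[symmetric] sum_distrib_left[symmetric] P_row_sum mult.assoc mult.left_commute)
  also have "\<dots> = (\<Sum>l\<in>UNIV. P i l * of_bool (x l)) * of_bool (x j)
       + of_bool (x i) * (\<Sum>l\<in>UNIV. P j l * of_bool (x l)) + (real CARD('n) - 2) * (of_bool (x i) * of_bool (x j))"
    by (rule sum_UNIV_if_eq2[OF assms])
  finally show ?thesis unfolding neutral_avg_def by (simp add: field_simps)
qed

lemma hat_fun_upd: "hat w (x(k := v)) = hat w x + \<pi> k * (of_bool v - of_bool (x k))"
  unfolding hat_def by (rule sum_fun_upd)

lemma hat_constant: "\<forall>i. x i = v \<Longrightarrow> hat w x = of_bool v"
  unfolding hat_def by (simp add: sum_distrib_right[symmetric] pi_sum)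

lemma neutral_avg_hat: "neutral_avg (hat w) x = hat w x"
proof -
  have "(\<Sum>k\<in>UNIV. \<Sum>l\<in>UNIV. P k l * hat w (x(k := x l)))
      = (\<Sum>k\<in>UNIV. hat w x + \<pi> k * ((\<Sum>l\<in>UNIV. P k l * of_bool (x l)) - of_bool (x k)))"
    by (rule sum.cong)
      (auto simp: hat_fun_upd algebra_simps sum.distrib sum_distrib_left[symmetric]
        sum_distrib_right[symmetric] P_row_sum sum_subtractf)
  also have "\<dots> = real CARD('n) * hat w x
      + ((\<Sum>k\<in>UNIV. \<pi> k * (\<Sum>l\<in>UNIV. P k l * of_bool (x l))) - (\<Sum>k\<in>UNIV. \<pi> k * of_bool (x k)))"
    by (simp add: sum.distrib right_diff_distrib sum_subtractf del: sum_mult_of_bool_eq)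
  also have "\<dots> = real CARD('n) * hat w x"
    by (simp only: stationary_avg diff_self add_0_right)
  finally show ?thesis unfolding neutral_avg_def by simp
qed

lemma row_avg_centred: "(\<Sum>k\<in>UNIV. P i k * (f k - hat w x)) = (\<Sum>k\<in>UNIV. P i k * f k) - hat w x"
  by (simp add: right_diff_distrib sum_subtractf sum_distrib_right[symmetric] P_row_sum)

lemma neutral_avg_beta_rhs_diag:
  "neutral_avg (\<lambda>y. beta_rhs y (i, i)) x
   = beta_rhs x (i, i) - beta_op (\<lambda>q. of_bool (x (fst q)) * of_bool (x (snd q)) - hat w x) (i, i)"
proof -
  have centred: "(\<Sum>k\<in>UNIV. \<pi> k * (of_bool (x k) - hat w x)) = 0"
    by (simp add: right_diff_distrib sum_subtractf sum_distrib_right[symmetric] pi_sum hat_def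
        del: sum_mult_of_bool_eq)
  have square: "of_bool b * of_bool b = (of_bool b :: real)" for b by simp
  have "neutral_avg (\<lambda>y. beta_rhs y (i, i)) x = neutral_avg (\<lambda>y. real CARD('n) * (of_bool (y i) - hat w y)) x"
    unfolding beta_rhs_def by simp
  also have "\<dots> = real CARD('n) * (neutral_avg (\<lambda>y. of_bool (y i)) x - neutral_avg (hat w) x)"
    by (simp only: neutral_avg_scale neutral_avg_diff)
  also have "\<dots> = real CARD('n) * (of_bool (x i) - hat w x) + (\<Sum>l\<in>UNIV. P i l * of_bool (x l)) - of_bool (x i)"
    by (simp add: neutral_avg_indicator neutral_avg_hat algebra_simps)
  also have "\<dots> = beta_rhs x (i, i) - beta_op (\<lambda>q. of_bool (x (fst q)) * of_bool (x (snd q)) - hat w x) (i, i)"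
    using row_avg_centred[of i "\<lambda>k. of_bool (x k)"] centred
    by (simp add: beta_rhs_def beta_op_def square del: sum_mult_of_bool_eq)
  finally show ?thesis .
qed

lemma neutral_avg_beta_rhs_offdiag:
  assumes "i \<noteq> j"
  shows "neutral_avg (\<lambda>y. beta_rhs y (i, j)) x
    = beta_rhs x (i, j) - beta_op (\<lambda>q. of_bool (x (fst q)) * of_bool (x (snd q)) - hat w x) (i, j)"
proof -
  have row_left: "(\<Sum>k\<in>UNIV. P i k * (of_bool (x k) * a - hat w x)) = (\<Sum>k\<in>UNIV. P i k * of_bool (x k)) * a - hat w x" for i a
    using row_avg_centred[of i "\<lambda>k. of_bool (x k) * a"]
    by (simp add: sum_distrib_right mult.assoc del: sum_mult_of_bool_eq)
  have row_right: "(\<Sum>k\<in>UNIV. P i k * (a * of_bool (x k) - hat w x)) = a * (\<Sum>k\<in>UNIV. P i k * of_bool (x k)) - hat w x" for i a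
    using row_avg_centred[of i "\<lambda>k. a * of_bool (x k)"]
    by (simp add: sum_distrib_left mult.left_commute del: sum_mult_of_bool_eq sum_of_bool_mult_eq)
  have "neutral_avg (\<lambda>y. beta_rhs y (i, j)) x
      = neutral_avg (\<lambda>y. real CARD('n) / 2 * (of_bool (y i) * of_bool (y j) - hat w y)) x"
    unfolding beta_rhs_def using assms by simp
  also have "\<dots> = real CARD('n) / 2 * (neutral_avg (\<lambda>y. of_bool (y i) * of_bool (y j)) x - neutral_avg (hat w) x)"
    by (simp only: neutral_avg_scale neutral_avg_diff)
  also have "\<dots> = real CARD('n) / 2 * (of_bool (x i) * of_bool (x j) - hat w x)
      - (of_bool (x i) * of_bool (x j) - 1/2 * (\<Sum>l\<in>UNIV. P i l * of_bool (x l)) * of_bool (x j)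
         - 1/2 * (of_bool (x i) * (\<Sum>l\<in>UNIV. P j l * of_bool (x l))))"
    by (simp add: neutral_avg_indicator_pair[OF assms] neutral_avg_hat algebra_simps)
  also have "\<dots> = beta_rhs x (i, j) - beta_op (\<lambda>q. of_bool (x (fst q)) * of_bool (x (snd q)) - hat w x) (i, j)"
    using assms row_left[of i "of_bool (x j)"] row_right[of j "of_bool (x i)"]
    by (simp add: beta_rhs_def beta_op_def algebra_simps)
  finally show ?thesis .
qed

lemma neutral_avg_beta_rhs:
  "neutral_avg (\<lambda>y. beta_rhs y p) x
   = beta_rhs x p - beta_op (\<lambda>q. of_bool (x (fst q)) * of_bool (x (snd q)) - hat w x) p"
proof (cases p)
  case (Pair i j)
  show ?thesis
  proof (cases "i = j")
    case True
    then show ?thesis unfolding Pair by (simp only: neutral_avg_beta_rhs_diag)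
  next
    case False
    then show ?thesis unfolding Pair by (rule neutral_avg_beta_rhs_offdiag)
  qed
qed

lemma neutral_avg_betaT:
  "neutral_avg (\<lambda>y. betaT w y i j) x = betaT w x i j - (of_bool (x i) * of_bool (x j) - hat w x)"
proof -
  define c where "c q = 1 / real CARD('n) * P (fst q) (snd q)" for q :: "'n \<times> 'n"
  define f where "f q p = betaT w (x(fst q := x (snd q))) (fst p) (snd p)" for q p :: "'n \<times> 'n"
  define m where "m q = of_bool (x (fst q)) * of_bool (x (snd q)) - hat w x" for q :: "'n \<times> 'n"
  \<comment> \<open>Both sides solve the same linear system.\<close>
  have "beta_op (\<lambda>p. neutral_avg (\<lambda>y. betaT w y (fst p) (snd p)) x)
      = beta_op (\<lambda>p. \<Sum>q\<in>UNIV. c q * f q p)"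
    unfolding neutral_avg_as_sum c_def f_def ..
  also have "\<dots> = (\<lambda>p. \<Sum>q\<in>UNIV. c q * beta_op (f q) p)" by (rule beta.op_lin_comb) simp
  also have "\<dots> = (\<lambda>p. neutral_avg (\<lambda>y. beta_rhs y p) x)"
    unfolding f_def beta_op_betaT neutral_avg_as_sum c_def ..
  also have "\<dots> = (\<lambda>p. beta_rhs x p - beta_op m p)"
    unfolding m_def neutral_avg_beta_rhs ..
  also have "\<dots> = beta_op (\<lambda>p. betaT w x (fst p) (snd p) - m p)"
    by (simp only: beta.op_diff beta_op_betaT)
  finally have "(\<lambda>p. neutral_avg (\<lambda>y. betaT w y (fst p) (snd p)) x) = (\<lambda>p. betaT w x (fst p) (snd p) - m p)"
    by (rule beta.op_cancel)
  from fun_cong[OF this, of "(i, j)"] show ?thesis by (simp add: m_def)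
qed

end

context connected_graph_pair
begin

abbreviation "\<mu> i j \<equiv> g2.\<pi> i * g1.\<pi> j"

lemma product_stationary_2:
  "(\<Sum>i\<in>UNIV. \<Sum>j\<in>UNIV. \<mu> i j * (\<Sum>k\<in>UNIV. g2.P i k * v k j)) = (\<Sum>i\<in>UNIV. \<Sum>j\<in>UNIV. \<mu> i j * v i j)"
proof -
  have "(\<Sum>i\<in>UNIV. \<Sum>j\<in>UNIV. \<mu> i j * (\<Sum>k\<in>UNIV. g2.P i k * v k j))
      = (\<Sum>j\<in>UNIV. g1.\<pi> j * (\<Sum>i\<in>UNIV. g2.\<pi> i * (\<Sum>k\<in>UNIV. g2.P i k * v k j)))"
    by (subst sum.swap) (simp add: sum_distrib_left mult_ac)
  also have "\<dots> = (\<Sum>j\<in>UNIV. g1.\<pi> j * (\<Sum>k\<in>UNIV. g2.\<pi> k * v k j))"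
    by (simp only: g2.stationary_avg)
  also have "\<dots> = (\<Sum>i\<in>UNIV. \<Sum>j\<in>UNIV. \<mu> i j * v i j)"
    by (subst sum.swap) (simp add: sum_distrib_left mult_ac)
  finally show ?thesis .
qed

lemma product_stationary_1:
  "(\<Sum>i\<in>UNIV. \<Sum>j\<in>UNIV. \<mu> i j * (\<Sum>k\<in>UNIV. g1.P j k * v i k)) = (\<Sum>i\<in>UNIV. \<Sum>j\<in>UNIV. \<mu> i j * v i j)"
proof -
  have "(\<Sum>i\<in>UNIV. \<Sum>j\<in>UNIV. \<mu> i j * (\<Sum>k\<in>UNIV. g1.P j k * v i k))
      = (\<Sum>i\<in>UNIV. g2.\<pi> i * (\<Sum>j\<in>UNIV. g1.\<pi> j * (\<Sum>k\<in>UNIV. g1.P j k * v i k)))"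
    by (simp add: sum_distrib_left mult_ac)
  also have "\<dots> = (\<Sum>i\<in>UNIV. g2.\<pi> i * (\<Sum>k\<in>UNIV. g1.\<pi> k * v i k))"
    by (simp only: g1.stationary_avg)
  also have "\<dots> = (\<Sum>i\<in>UNIV. \<Sum>j\<in>UNIV. \<mu> i j * v i j)"
    by (simp add: sum_distrib_left mult_ac)
  finally show ?thesis .
qed

lemma product_stationary_pair_avg:
  "(\<Sum>i\<in>UNIV. \<Sum>j\<in>UNIV. \<mu> i j * pair_avg v i j) = (\<Sum>i\<in>UNIV. \<Sum>j\<in>UNIV. \<mu> i j * v i j)"
proof -
  define c1 where "c1 = 1 / (2 * real CARD('n) - 1)"
  define c2 where "c2 = (real CARD('n) - 1) / (2 * real CARD('n) - 1)"
  define S where "S = (\<Sum>i\<in>UNIV. \<Sum>j\<in>UNIV. \<mu> i j * v i j)"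
  have both: "(\<Sum>i\<in>UNIV. \<Sum>j\<in>UNIV. \<mu> i j * (\<Sum>k1\<in>UNIV. \<Sum>k2\<in>UNIV. g2.P i k1 * g1.P j k2 * v k1 k2)) = S"
  proof -
    have inner: "(\<Sum>k1\<in>UNIV. \<Sum>k2\<in>UNIV. g2.P i k1 * g1.P j k2 * v k1 k2)
        = (\<Sum>k1\<in>UNIV. g2.P i k1 * (\<Sum>k2\<in>UNIV. g1.P j k2 * v k1 k2))" for i j
      by (simp add: sum_distrib_left mult_ac)
    have "(\<Sum>i\<in>UNIV. \<Sum>j\<in>UNIV. \<mu> i j * (\<Sum>k1\<in>UNIV. \<Sum>k2\<in>UNIV. g2.P i k1 * g1.P j k2 * v k1 k2))
        = (\<Sum>i\<in>UNIV. \<Sum>j\<in>UNIV. \<mu> i j * (\<Sum>k1\<in>UNIV. g2.P i k1 * (\<Sum>k2\<in>UNIV. g1.P j k2 * v k1 k2)))"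
      by (simp only: inner)
    also have "\<dots> = (\<Sum>i\<in>UNIV. \<Sum>j\<in>UNIV. \<mu> i j * (\<Sum>k2\<in>UNIV. g1.P j k2 * v i k2))"
      by (rule product_stationary_2)
    also have "\<dots> = S" unfolding S_def by (rule product_stationary_1)
    finally show ?thesis .
  qed
  have "(\<Sum>i\<in>UNIV. \<Sum>j\<in>UNIV. \<mu> i j * pair_avg v i j)
     = c1 * (\<Sum>i\<in>UNIV. \<Sum>j\<in>UNIV. \<mu> i j * (\<Sum>k1\<in>UNIV. \<Sum>k2\<in>UNIV. g2.P i k1 * g1.P j k2 * v k1 k2))
       + c2 * (\<Sum>i\<in>UNIV. \<Sum>j\<in>UNIV. \<mu> i j * (\<Sum>k\<in>UNIV. g2.P i k * v k j))
       + c2 * (\<Sum>i\<in>UNIV. \<Sum>j\<in>UNIV. \<mu> i j * (\<Sum>k\<in>UNIV. g1.P j k * v i k))"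
    unfolding pair_avg_def c1_def[symmetric] c2_def[symmetric]
    by (simp add: distrib_left sum.distrib sum_distrib_left mult_ac)
  also have "\<dots> = (c1 + 2 * c2) * S"
    unfolding both product_stationary_1 product_stationary_2 S_def by (simp add: algebra_simps)
  finally show ?thesis using pair_avg_weights unfolding c1_def c2_def S_def by simp
qed

lemma product_weights_sum: "(\<Sum>i\<in>UNIV. \<Sum>j\<in>UNIV. \<mu> i j * c) = c"
  by (simp add: sum_distrib_right[symmetric] sum_distrib_left[symmetric] g1.pi_sum g2.pi_sum)

definition gamma_op :: "('n \<times> 'n \<Rightarrow> real) \<Rightarrow> ('n \<times> 'n \<Rightarrow> real)" where
  "gamma_op v = (\<lambda>(i, j). v (i, j) - pair_avg (\<lambda>a b. v (a, b)) i j + (\<Sum>k\<in>UNIV. g2.\<pi> k * v (k, k)))"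

definition gamma_rhs :: "'n state \<Rightarrow> ('n \<times> 'n \<Rightarrow> real)" where
  "gamma_rhs s = (\<lambda>(i, j). real CARD('n) ^ 2 / (2 * real CARD('n) - 1) *
     (of_bool (snd s i) * of_bool (fst s j) - hat w1 (fst s) * hat w2 (snd s)))"

lemma product_stationary_gamma_op:
  "(\<Sum>i\<in>UNIV. \<Sum>j\<in>UNIV. \<mu> i j * gamma_op v (i, j)) = (\<Sum>k\<in>UNIV. g2.\<pi> k * v (k, k))"
proof -
  have "(\<Sum>i\<in>UNIV. \<Sum>j\<in>UNIV. \<mu> i j * gamma_op v (i, j))
     = (\<Sum>i\<in>UNIV. \<Sum>j\<in>UNIV. \<mu> i j * v (i, j))
       - (\<Sum>i\<in>UNIV. \<Sum>j\<in>UNIV. \<mu> i j * pair_avg (\<lambda>a b. v (a, b)) i j)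
       + (\<Sum>i\<in>UNIV. \<Sum>j\<in>UNIV. \<mu> i j * (\<Sum>k\<in>UNIV. g2.\<pi> k * v (k, k)))"
    unfolding gamma_op_def by (simp add: right_diff_distrib distrib_left sum.distrib sum_subtractf)
  then show ?thesis unfolding product_stationary_pair_avg product_weights_sum by simp
qed

lemma product_stationary_gamma_rhs: "(\<Sum>i\<in>UNIV. \<Sum>j\<in>UNIV. \<mu> i j * gamma_rhs s (i, j)) = 0"
proof -
  define a where "a = real CARD('n) ^ 2 / (2 * real CARD('n) - 1)"
  have "(\<Sum>i\<in>UNIV. \<Sum>j\<in>UNIV. \<mu> i j * gamma_rhs s (i, j))
     = a * ((\<Sum>i\<in>UNIV. g2.\<pi> i * of_bool (snd s i)) * (\<Sum>j\<in>UNIV. g1.\<pi> j * of_bool (fst s j))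
            - (\<Sum>i\<in>UNIV. \<Sum>j\<in>UNIV. \<mu> i j * (hat w1 (fst s) * hat w2 (snd s))))"
    unfolding gamma_rhs_def a_def[symmetric]
    by (simp add: right_diff_distrib sum_subtractf sum_distrib_left sum_product mult_ac
        del: sum_mult_of_bool_eq sum_of_bool_mult_eq)
  also have "\<dots> = 0" unfolding product_weights_sum by (simp add: hat_def)
  finally show ?thesis .
qed

sublocale gamma: injective_linear_op gamma_op
proof
  show "gamma_op (\<lambda>p. u p + v p) = (\<lambda>p. gamma_op u p + gamma_op v p)" for u v
    unfolding gamma_op_def pair_avg_def by (rule ext) (auto simp: sum.distrib distrib_left)
  show "gamma_op (\<lambda>p. c * u p) = (\<lambda>p. c * gamma_op u p)" for c u
    unfolding gamma_op_def pair_avg_def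
    by (rule ext) (auto simp: sum_distrib_left right_diff_distrib distrib_left mult.left_commute)
next
  fix v :: "'n \<times> 'n \<Rightarrow> real"
  assume kernel: "gamma_op v = (\<lambda>_. 0)"
  define S where "S = (\<Sum>k\<in>UNIV. g2.\<pi> k * v (k, k))"
  have "S = 0" using product_stationary_gamma_op[of v] kernel unfolding S_def by simp
  then have fixed: "(\<lambda>a b. v (a, b)) i j = pair_avg (\<lambda>a b. v (a, b)) i j" for i j
    using fun_cong[OF kernel, of "(i, j)"] unfolding gamma_op_def S_def by simp
  have const: "v (i, j) = v (i', j')" for i j i' j'
    using pair_avg_fixed_imp_const[of "\<lambda>a b. v (a, b)", OF fixed] by simp
  have "S = v (i, j)" for i j
  proof -
    have "S = (\<Sum>k\<in>UNIV. g2.\<pi> k * v (i, j))" unfolding S_def using const by metis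
    also have "\<dots> = v (i, j)" by (simp add: sum_distrib_right[symmetric] g2.pi_sum)
    finally show ?thesis .
  qed
  then show "v = (\<lambda>_. 0)" using \<open>S = 0\<close> by (auto simp: fun_eq_iff)
qed

lemma gamma_sys_iff: "gamma_sys w1 w2 s \<gamma> \<longleftrightarrow> gamma_op (\<lambda>p. \<gamma> (fst p) (snd p)) = gamma_rhs s"
proof
  assume sys: "gamma_sys w1 w2 s \<gamma>"
  have eq: "\<gamma> i j = gamma_rhs s (i, j) + pair_avg \<gamma> i j" for i j
    using sys unfolding gamma_sys_def gamma_rhs_def pair_avg_def prod.case add.assoc by blast
  have normalised: "(\<Sum>i\<in>UNIV. g2.\<pi> i * \<gamma> i i) = 0"
    using sys unfolding gamma_sys_def by blast
  show "gamma_op (\<lambda>p. \<gamma> (fst p) (snd p)) = gamma_rhs s"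
  proof (rule ext, clarify)
    fix i j :: 'n
    show "gamma_op (\<lambda>p. \<gamma> (fst p) (snd p)) (i, j) = gamma_rhs s (i, j)"
      using eq[of i j] normalised unfolding gamma_op_def by simp
  qed
next
  assume op: "gamma_op (\<lambda>p. \<gamma> (fst p) (snd p)) = gamma_rhs s"
  have normalised: "(\<Sum>k\<in>UNIV. g2.\<pi> k * \<gamma> k k) = 0"
    using product_stationary_gamma_op[of "\<lambda>p. \<gamma> (fst p) (snd p)"] product_stationary_gamma_rhs[of s] op
    by simp
  show "gamma_sys w1 w2 s \<gamma>"
    unfolding gamma_sys_def
  proof (intro conjI allI normalised)
    fix i j
    show "\<gamma> i j = real CARD('n) ^ 2 / (2 * real CARD('n) - 1) *
          (of_bool (snd s i) * of_bool (fst s j) - hat w1 (fst s) * hat w2 (snd s)) +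
          1 / (2 * real CARD('n) - 1) * (\<Sum>k1\<in>UNIV. \<Sum>k2\<in>UNIV. g2.P i k1 * g1.P j k2 * \<gamma> k1 k2) +
          (real CARD('n) - 1) / (2 * real CARD('n) - 1) *
          ((\<Sum>k\<in>UNIV. g2.P i k * \<gamma> k j) + (\<Sum>k\<in>UNIV. g1.P j k * \<gamma> i k))"
      using fun_cong[OF op, of "(i, j)"] normalised unfolding gamma_op_def gamma_rhs_def pair_avg_def by simp
  qed
qed

lemma gamma_sys_ex1: "\<exists>!\<gamma>. gamma_sys w1 w2 s \<gamma>"
proof -
  obtain v where v: "gamma_op v = gamma_rhs s" using gamma.op_surj by blast
  show ?thesis
  proof (rule ex1I[of _ "\<lambda>i j. v (i, j)"])
    show "gamma_sys w1 w2 s (\<lambda>i j. v (i, j))" using v by (simp add: gamma_sys_iff)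
    fix \<gamma>
    assume "gamma_sys w1 w2 s \<gamma>"
    then have "gamma_op (\<lambda>p. \<gamma> (fst p) (snd p)) = gamma_op v" using v by (simp add: gamma_sys_iff)
    then have "(\<lambda>p. \<gamma> (fst p) (snd p)) = v" by (rule gamma.op_cancel)
    then show "\<gamma> = (\<lambda>i j. v (i, j))" by (auto simp: fun_eq_iff)
  qed
qed

lemma gammaT_sys: "gamma_sys w1 w2 s (gammaT w1 w2 s)"
  unfolding gammaT_def by (rule theI'[OF gamma_sys_ex1])

lemma gammaT_eqI: "gamma_sys w1 w2 s \<gamma> \<Longrightarrow> gammaT w1 w2 s = \<gamma>"
  using gamma_sys_ex1 gammaT_sys by blast

lemma gamma_op_gammaT: "gamma_op (\<lambda>p. gammaT w1 w2 s (fst p) (snd p)) = gamma_rhs s"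
  using gammaT_sys by (simp add: gamma_sys_iff)

definition neutral_avg2 :: "('n state \<Rightarrow> real) \<Rightarrow> 'n state \<Rightarrow> real" where
  "neutral_avg2 G s = 1 / real CARD('n) ^ 2 * (\<Sum>a\<in>UNIV. \<Sum>b\<in>UNIV. \<Sum>k\<in>UNIV. \<Sum>l\<in>UNIV.
      g1.P a b * g2.P k l * G ((fst s)(a := fst s b), (snd s)(k := snd s l)))"

lemma neutral_avg2_product:
  "neutral_avg2 (\<lambda>u. G1 (fst u) * G2 (snd u)) s = g1.neutral_avg G1 (fst s) * g2.neutral_avg G2 (snd s)"
proof -
  have "g1.neutral_avg G1 (fst s) * g2.neutral_avg G2 (snd s) = 1 / real CARD('n) ^ 2 *
     ((\<Sum>a\<in>UNIV. \<Sum>b\<in>UNIV. g1.P a b * G1 ((fst s)(a := fst s b)))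
      * (\<Sum>k\<in>UNIV. \<Sum>l\<in>UNIV. g2.P k l * G2 ((snd s)(k := snd s l))))"
    unfolding g1.neutral_avg_def g2.neutral_avg_def by (simp add: power2_eq_square)
  also have "\<dots> = neutral_avg2 (\<lambda>u. G1 (fst u) * G2 (snd u)) s"
    unfolding sum_sum_product neutral_avg2_def by (simp add: mult_ac)
  finally show ?thesis by simp
qed

lemma neutral_avg2_snd: "neutral_avg2 (\<lambda>u. G (snd u)) s = g2.neutral_avg G (snd s)"
  using neutral_avg2_product[of "\<lambda>_. 1" G s] by (simp add: g1.neutral_avg_const)

lemma neutral_avg2_as_sum:
  "neutral_avg2 G s = (\<Sum>q\<in>UNIV. (1 / real CARD('n) ^ 2 * (g1.P (fst (fst q)) (snd (fst q)) * g2.P (fst (snd q)) (snd (snd q))))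
    * G ((fst s)(fst (fst q) := fst s (snd (fst q))), (snd s)(fst (snd q) := snd s (snd (snd q)))))"
  unfolding neutral_avg2_def by (simp add: sum_UNIV_prod sum_distrib_left mult.assoc)

lemma neutral_avg2_add: "neutral_avg2 (\<lambda>y. G y + H y) s = neutral_avg2 G s + neutral_avg2 H s"
  unfolding neutral_avg2_def by (simp add: distrib_left sum.distrib)

lemma neutral_avg2_scale: "neutral_avg2 (\<lambda>y. c * G y) s = c * neutral_avg2 G s"
  unfolding neutral_avg2_def by (simp add: sum_distrib_left algebra_simps)

lemma neutral_avg2_diff: "neutral_avg2 (\<lambda>y. G y - H y) s = neutral_avg2 G s - neutral_avg2 H s"
  unfolding neutral_avg2_def by (simp add: right_diff_distrib sum_subtractf)

lemma neutral_avg2_sum: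
  "finite A \<Longrightarrow> neutral_avg2 (\<lambda>y. \<Sum>i\<in>A. f i y) s = (\<Sum>i\<in>A. neutral_avg2 (f i) s)"
proof (induction A rule: finite_induct)
  case empty
  show ?case using neutral_avg2_scale[of 0 "\<lambda>_. 0" s] by simp
next
  case (insert a F)
  then show ?case using neutral_avg2_add[of "f a" "\<lambda>y. \<Sum>i\<in>F. f i y" s] by simp
qed

definition hat_both :: "'n state \<Rightarrow> real" where
  "hat_both s = (\<Sum>k\<in>UNIV. g2.\<pi> k * (of_bool (snd s k) * of_bool (fst s k)))"

lemma neutral_avg2_gamma_rhs_expand:
  fixes s :: "'n state" and i j :: 'n
  defines "X \<equiv> of_bool (snd s i) :: real" and "Y \<equiv> of_bool (fst s j) :: real"
    and "A \<equiv> \<Sum>l\<in>UNIV. g2.P i l * of_bool (snd s l)" and "B \<equiv> \<Sum>l\<in>UNIV. g1.P j l * of_bool (fst s l)"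
    and "N \<equiv> real CARD('n)"
  shows "neutral_avg2 (\<lambda>u. gamma_rhs u (i, j)) s
    = (((N - 1) * Y + B) * ((N - 1) * X + A) - N ^ 2 * (hat w1 (fst s) * hat w2 (snd s))) / (2 * N - 1)"
proof -
  have N: "N \<noteq> 0" "2 * N - 1 \<noteq> 0" unfolding N_def using N_ge_2 by simp_all
  have "neutral_avg2 (\<lambda>u. gamma_rhs u (i, j)) s = N ^ 2 / (2 * N - 1) *
      (neutral_avg2 (\<lambda>u. of_bool (fst u j) * of_bool (snd u i)) s
       - neutral_avg2 (\<lambda>u. hat w1 (fst u) * hat w2 (snd u)) s)"
    unfolding gamma_rhs_def N_def
    by (simp add: neutral_avg2_scale[symmetric] neutral_avg2_diff[symmetric] mult.commute)
  also have "\<dots> = N ^ 2 / (2 * N - 1) * ((Y + 1 / N * (B - Y)) * (X + 1 / N * (A - X))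
      - hat w1 (fst s) * hat w2 (snd s))"
    using neutral_avg2_product[of "\<lambda>y. of_bool (y j)" "\<lambda>y. of_bool (y i)" s]
      neutral_avg2_product[of "hat w1" "hat w2" s]
    unfolding g1.neutral_avg_indicator g2.neutral_avg_indicator g1.neutral_avg_hat g2.neutral_avg_hat
      X_def Y_def A_def B_def N_def
    by simp
  also have "\<dots> = (((N - 1) * Y + B) * ((N - 1) * X + A) - N ^ 2 * (hat w1 (fst s) * hat w2 (snd s))) / (2 * N - 1)"
    using N by (simp add: field_simps power2_eq_square)
  finally show ?thesis .
qed

lemma gamma_op_types_centred:
  fixes s :: "'n state" and i j :: 'n
  defines "m \<equiv> \<lambda>q. of_bool (snd s (fst q)) * of_bool (fst s (snd q)) - hat_both s"
    and "X \<equiv> of_bool (snd s i) :: real" and "Y \<equiv> of_bool (fst s j) :: real"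
    and "A \<equiv> \<Sum>l\<in>UNIV. g2.P i l * of_bool (snd s l)" and "B \<equiv> \<Sum>l\<in>UNIV. g1.P j l * of_bool (fst s l)"
    and "N \<equiv> real CARD('n)"
  shows "gamma_op m (i, j) = X * Y - hat_both s
    - (1 / (2 * N - 1) * (A * B - hat_both s) + (N - 1) / (2 * N - 1) * ((A * Y - hat_both s) + (X * B - hat_both s)))"
proof -
  have avg_both: "(\<Sum>k1\<in>UNIV. \<Sum>k2\<in>UNIV. g2.P i k1 * g1.P j k2 * m (k1, k2)) = A * B - hat_both s"
  proof -
    have "(\<Sum>k1\<in>UNIV. \<Sum>k2\<in>UNIV. g2.P i k1 * g1.P j k2 * m (k1, k2))
        = (\<Sum>k1\<in>UNIV. \<Sum>k2\<in>UNIV. (g2.P i k1 * of_bool (snd s k1)) * (g1.P j k2 * of_bool (fst s k2)))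
          - (\<Sum>k1\<in>UNIV. \<Sum>k2\<in>UNIV. g2.P i k1 * g1.P j k2 * hat_both s)"
      unfolding m_def by (simp add: right_diff_distrib sum_subtractf mult_ac del: sum_mult_of_bool_eq sum_of_bool_mult_eq)
    also have "(\<Sum>k1\<in>UNIV. \<Sum>k2\<in>UNIV. (g2.P i k1 * of_bool (snd s k1)) * (g1.P j k2 * of_bool (fst s k2))) = A * B"
      unfolding A_def B_def by (simp add: sum_product del: sum_mult_of_bool_eq sum_of_bool_mult_eq)
    also have "(\<Sum>k1\<in>UNIV. \<Sum>k2\<in>UNIV. g2.P i k1 * g1.P j k2 * hat_both s) = hat_both s"
      by (simp add: sum_distrib_right[symmetric] sum_distrib_left[symmetric] mult.assoc g1.P_row_sum g2.P_row_sum)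
    finally show ?thesis .
  qed
  have avg_2: "(\<Sum>k\<in>UNIV. g2.P i k * m (k, j)) = A * Y - hat_both s"
    unfolding m_def A_def Y_def
    by (simp add: right_diff_distrib sum_subtractf sum_distrib_right[symmetric] g2.P_row_sum mult.assoc
        del: sum_mult_of_bool_eq sum_of_bool_mult_eq)
  have avg_1: "(\<Sum>k\<in>UNIV. g1.P j k * m (i, k)) = X * B - hat_both s"
    unfolding m_def X_def B_def
    by (simp add: right_diff_distrib sum_subtractf sum_distrib_right[symmetric] sum_distrib_left
        g1.P_row_sum mult.left_commute del: sum_mult_of_bool_eq sum_of_bool_mult_eq)
  have centred: "(\<Sum>k\<in>UNIV. g2.\<pi> k * m (k, k)) = 0"
    unfolding m_def hat_both_def
    by (simp add: right_diff_distrib sum_subtractf sum_distrib_right[symmetric] g2.pi_sum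
        del: sum_mult_of_bool_eq sum_of_bool_mult_eq)
  have "pair_avg (\<lambda>a b. m (a, b)) i j
      = 1 / (2 * N - 1) * (A * B - hat_both s) + (N - 1) / (2 * N - 1) * ((A * Y - hat_both s) + (X * B - hat_both s))"
    unfolding pair_avg_def avg_both avg_1 avg_2 N_def ..
  then show ?thesis unfolding gamma_op_def prod.case centred by (simp add: m_def X_def Y_def)
qed

lemma neutral_avg2_gamma_rhs:
  "neutral_avg2 (\<lambda>u. gamma_rhs u (i, j)) s
   = gamma_rhs s (i, j) - gamma_op (\<lambda>q. of_bool (snd s (fst q)) * of_bool (fst s (snd q)) - hat_both s) (i, j)"
proof -
  define X where "X = (of_bool (snd s i) :: real)"
  define Y where "Y = (of_bool (fst s j) :: real)"
  define A where "A = (\<Sum>l\<in>UNIV. g2.P i l * of_bool (snd s l))"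
  define B where "B = (\<Sum>l\<in>UNIV. g1.P j l * of_bool (fst s l))"
  define h where "h = hat w1 (fst s) * hat w2 (snd s)"
  define N where "N = real CARD('n)"
  define D where "D = 2 * N - 1"
  have D: "D \<noteq> 0" unfolding D_def N_def using N_ge_2 by simp
  have "gamma_rhs s (i, j) - gamma_op (\<lambda>q. of_bool (snd s (fst q)) * of_bool (fst s (snd q)) - hat_both s) (i, j)
      = N ^ 2 / D * (X * Y - h) - (X * Y - hat_both s
        - (1 / D * (A * B - hat_both s) + (N - 1) / D * ((A * Y - hat_both s) + (X * B - hat_both s))))"
    unfolding gamma_op_types_centred gamma_rhs_def prod.case X_def Y_def A_def B_def h_def N_def D_def ..
  also have "\<dots> = (N ^ 2 * (X * Y - h) - D * (X * Y - hat_both s) + (A * B - hat_both s)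
      + (N - 1) * ((A * Y - hat_both s) + (X * B - hat_both s))) / D"
    using D by (simp add: field_simps)
  also have "\<dots> = (((N - 1) * Y + B) * ((N - 1) * X + A) - N ^ 2 * h) / D"
    unfolding D_def by (rule arg_cong[where f = "\<lambda>t. t / _"]) (simp add: algebra_simps power2_eq_square)
  finally show ?thesis
    unfolding neutral_avg2_gamma_rhs_expand X_def Y_def A_def B_def h_def N_def D_def ..
qed

lemma neutral_avg2_gammaT:
  "neutral_avg2 (\<lambda>u. gammaT w1 w2 u i j) s = gammaT w1 w2 s i j - (of_bool (snd s i) * of_bool (fst s j) - hat_both s)"
proof -
  define c where "c q = 1 / real CARD('n) ^ 2 * (g1.P (fst (fst q)) (snd (fst q)) * g2.P (fst (snd q)) (snd (snd q)))"
    for q :: "('n \<times> 'n) \<times> ('n \<times> 'n)"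
  define su where "su q = ((fst s)(fst (fst q) := fst s (snd (fst q))), (snd s)(fst (snd q) := snd s (snd (snd q))))"
    for q :: "('n \<times> 'n) \<times> ('n \<times> 'n)"
  define f where "f q p = gammaT w1 w2 (su q) (fst p) (snd p)" for q p
  define m where "m q = of_bool (snd s (fst q)) * of_bool (fst s (snd q)) - hat_both s" for q :: "'n \<times> 'n"
  \<comment> \<open>Both sides solve the same linear system.\<close>
  have "gamma_op (\<lambda>p. neutral_avg2 (\<lambda>u. gammaT w1 w2 u (fst p) (snd p)) s)
      = gamma_op (\<lambda>p. \<Sum>q\<in>UNIV. c q * f q p)"
    unfolding neutral_avg2_as_sum c_def f_def su_def ..
  also have "\<dots> = (\<lambda>p. \<Sum>q\<in>UNIV. c q * gamma_op (f q) p)" by (rule gamma.op_lin_comb) simp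
  also have "\<dots> = (\<lambda>p. neutral_avg2 (\<lambda>u. gamma_rhs u p) s)"
    unfolding f_def gamma_op_gammaT neutral_avg2_as_sum c_def su_def ..
  also have "\<dots> = (\<lambda>p. gamma_rhs s p - gamma_op m p)"
    unfolding m_def by (rule ext, clarify) (rule neutral_avg2_gamma_rhs)
  also have "\<dots> = gamma_op (\<lambda>p. gammaT w1 w2 s (fst p) (snd p) - m p)"
    by (simp only: gamma.op_diff gamma_op_gammaT)
  finally have "(\<lambda>p. neutral_avg2 (\<lambda>u. gammaT w1 w2 u (fst p) (snd p)) s)
      = (\<lambda>p. gammaT w1 w2 s (fst p) (snd p) - m p)"
    by (rule gamma.op_cancel)
  from fun_cong[OF this, of "(i, j)"] show ?thesis by (simp add: m_def)
qed

end

section \<open>The two-layer chain\<close>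

lemma layer_step_avg:
  fixes w :: "'n::finite \<Rightarrow> 'n \<Rightarrow> real"
  shows "(\<Sum>y\<in>UNIV. layer_step w F x y * G y)
    = 1 / real CARD('n) * (\<Sum>i\<in>UNIV. \<Sum>j\<in>UNIV. w i j * F j / (\<Sum>k\<in>UNIV. w i k * F k) * G (x(i := x j)))"
proof -
  define a where "a i j = w i j * F j / (\<Sum>k\<in>UNIV. w i k * F k)" for i j
  have "(\<Sum>y\<in>UNIV. layer_step w F x y * G y)
      = 1 / real CARD('n) * (\<Sum>y\<in>UNIV. \<Sum>i\<in>UNIV. \<Sum>j\<in>UNIV. (if y = x(i := x j) then a i j else 0) * G y)"
    unfolding layer_step_def a_def by (simp add: sum_distrib_right sum_distrib_left mult.assoc)
  also have "(\<Sum>y\<in>UNIV. \<Sum>i\<in>UNIV. \<Sum>j\<in>UNIV. (if y = x(i := x j) then a i j else 0) * G y)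
      = (\<Sum>i\<in>UNIV. \<Sum>j\<in>UNIV. \<Sum>y\<in>UNIV. (if y = x(i := x j) then a i j else 0) * G y)"
    by (subst sum.swap) (rule sum.cong[OF refl], rule sum.swap)
  also have "\<dots> = (\<Sum>i\<in>UNIV. \<Sum>j\<in>UNIV. a i j * G (x(i := x j)))"
  proof -
    have "(\<Sum>y\<in>UNIV. (if y = z then a' else 0) * G y) = a' * G z" for z a'
      by (simp add: if_distrib[where f = "\<lambda>t. t * G _"] cong: if_cong)
    then show ?thesis by simp
  qed
  finally show ?thesis unfolding a_def .
qed

lemma layer_step_nonzero_imp_upd:
  assumes "layer_step w F x y \<noteq> 0"
  obtains i j where "y = x(i := x j)"
proof -
  have "\<exists>i j. y = x(i := x j)"
  proof (rule ccontr)
    assume "\<nexists>i j. y = x(i := x j)"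
    then have "layer_step w F x y = 0" unfolding layer_step_def by simp
    with assms show False by simp
  qed
  then show ?thesis using that by blast
qed

lemma trans_avg:
  fixes w1 w2 :: "'n::finite \<Rightarrow> 'n \<Rightarrow> real" and b c r \<delta> :: real and s :: "'n state"
  defines "F \<equiv> fecundity b c r w1 \<delta> s"
  shows "(\<Sum>u\<in>UNIV. trans b c r w1 w2 \<delta> s u * G u)
    = 1 / real CARD('n) ^ 2 * (\<Sum>a\<in>UNIV. \<Sum>a'\<in>UNIV. \<Sum>k\<in>UNIV. \<Sum>l\<in>UNIV.
        (w1 a a' * F a' / (\<Sum>m\<in>UNIV. w1 a m * F m)) * (w2 k l * F l / (\<Sum>m\<in>UNIV. w2 k m * F m))
        * G ((fst s)(a := fst s a'), (snd s)(k := snd s l)))"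
proof -
  define H where "H u1 = 1 / real CARD('n) * (\<Sum>k\<in>UNIV. \<Sum>l\<in>UNIV.
        (w2 k l * F l / (\<Sum>m\<in>UNIV. w2 k m * F m)) * G (u1, (snd s)(k := snd s l)))" for u1
  have "(\<Sum>u\<in>UNIV. trans b c r w1 w2 \<delta> s u * G u)
      = (\<Sum>u1\<in>UNIV. layer_step w1 F (fst s) u1 * (\<Sum>u2\<in>UNIV. layer_step w2 F (snd s) u2 * G (u1, u2)))"
    unfolding sum_UNIV_prod[of "\<lambda>u. trans b c r w1 w2 \<delta> s u * G u"]
    unfolding trans_def F_def by (simp add: sum_distrib_left mult.assoc)
  also have "\<dots> = (\<Sum>u1\<in>UNIV. layer_step w1 F (fst s) u1 * H u1)"
    unfolding H_def by (simp only: layer_step_avg)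
  also have "\<dots> = 1 / real CARD('n) * (\<Sum>a\<in>UNIV. \<Sum>a'\<in>UNIV.
      w1 a a' * F a' / (\<Sum>m\<in>UNIV. w1 a m * F m) * H ((fst s)(a := fst s a')))"
    by (rule layer_step_avg)
  also have "\<dots> = 1 / real CARD('n) ^ 2 * (\<Sum>a\<in>UNIV. \<Sum>a'\<in>UNIV. \<Sum>k\<in>UNIV. \<Sum>l\<in>UNIV.
        (w1 a a' * F a' / (\<Sum>m\<in>UNIV. w1 a m * F m)) * (w2 k l * F l / (\<Sum>m\<in>UNIV. w2 k m * F m))
        * G ((fst s)(a := fst s a'), (snd s)(k := snd s l)))"
    unfolding H_def by (simp add: sum_distrib_left power2_eq_square mult_ac)
  finally show ?thesis .
qed

lemma fecundity_0: "fecundity b c r w1 0 s = (\<lambda>_. 1)"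
  unfolding fecundity_def by simp

definition absorption_distance :: "('n \<Rightarrow> bool) \<Rightarrow> nat" where
  "absorption_distance x = (if monomorphic x then 0 else CARD('n) - card {i. x i})"

context connected_graph
begin

lemma weighted_strength_pos:
  assumes "\<And>j. F j > 0"
  shows "(\<Sum>k\<in>UNIV. w i k * F k) > 0"
proof -
  obtain k where k: "w i k > 0" using exists_neighbour by blast
  have "w i k * F k \<le> (\<Sum>k\<in>UNIV. w i k * F k)"
    by (rule member_le_sum) (auto intro: mult_nonneg_nonneg less_imp_le assms weight_nonneg)
  moreover have "w i k * F k > 0" using k assms[of k] by simp
  ultimately show ?thesis by linarith
qed

lemma layer_step_nonneg:
  assumes "\<And>j. F j > 0"
  shows "layer_step w F x y \<ge> 0"
proof -
  have "0 \<le> w i j * F j / (\<Sum>k\<in>UNIV. w i k * F k)" for i j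
    using weighted_strength_pos[of F i, OF assms] assms[of j] weight_nonneg[of i j] by simp
  then show ?thesis unfolding layer_step_def by (intro mult_nonneg_nonneg sum_nonneg) auto
qed

lemma layer_step_neutral_pos:
  assumes "P a a' > 0"
  shows "layer_step w (\<lambda>_. 1) x (x(a := x a')) > 0"
proof -
  define g where "g i j = (if x(a := x a') = x(i := x j) then w i j * 1 / (\<Sum>k\<in>UNIV. w i k * 1) else 0)" for i j
  have g_nonneg: "g i j \<ge> 0" for i j
    unfolding g_def using weight_nonneg[of i j] strength_pos[of i] by (simp add: strength_def)
  have "g a a' \<le> (\<Sum>j\<in>UNIV. g a j)" by (rule member_le_sum) (auto simp: g_nonneg)
  also have "\<dots> \<le> (\<Sum>i\<in>UNIV. \<Sum>j\<in>UNIV. g i j)" by (rule member_le_sum) (auto simp: g_nonneg sum_nonneg)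
  finally have "P a a' \<le> (\<Sum>i\<in>UNIV. \<Sum>j\<in>UNIV. g i j)" unfolding g_def tprob_def strength_def by simp
  then show ?thesis using assms unfolding layer_step_def g_def[symmetric] by simp
qed

lemma exists_mixed_edge:
  assumes "\<not> monomorphic x"
  obtains k l where "\<not> x k" "x l" "P k l > 0"
proof -
  obtain k0 l0 where k0: "\<not> x k0" and l0: "x l0" using assms unfolding monomorphic_def by blast
  have "x z \<longrightarrow> (\<exists>k l. \<not> x k \<and> x l \<and> P k l > 0)" if "(k0, z) \<in> {(a, b). P a b > 0}\<^sup>*" for z
    using that
  proof (induction rule: rtrancl_induct)
    case (step y z)
    then show ?case by (cases "x y") blast+
  qed (simp add: k0)
  then show ?thesis using P_connected[of k0 l0] l0 that by blast
qed

lemma exists_neutral_step_towards_absorption: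
  obtains a a' where "P a a' > 0" "absorption_distance (x(a := x a')) \<le> absorption_distance x"
    "\<not> monomorphic x \<Longrightarrow> absorption_distance (x(a := x a')) < absorption_distance x"
proof (cases "monomorphic x")
  case True
  obtain k where "w undefined k > 0" using exists_neighbour by blast
  moreover have "x(undefined := x k) = x" using True unfolding monomorphic_def by (auto simp: fun_eq_iff)
  ultimately show ?thesis using that[of undefined k] True P_pos_iff by auto
next
  case False
  obtain k l where kl: "\<not> x k" "x l" "P k l > 0" using exists_mixed_edge[OF False] .
  have "Collect (x(k := x l)) = insert k (Collect x)" using kl by auto
  then have "card (Collect (x(k := x l))) = Suc (card (Collect x))" using kl(1) by simp
  moreover have "card (Collect x) < CARD('n)" using kl(1) by (intro psubset_card_mono) auto
  ultimately have "absorption_distance (x(k := x l)) < absorption_distance x"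
    unfolding absorption_distance_def using False by auto
  then show ?thesis using that[of k l] kl(3) by simp
qed

lemma layer_step_row_sum:
  assumes "\<And>j. F j > 0"
  shows "(\<Sum>y\<in>UNIV. layer_step w F x y) = 1"
proof -
  have "(\<Sum>j\<in>UNIV. w i j * F j / (\<Sum>k\<in>UNIV. w i k * F k) * 1) = 1" for i
    using weighted_strength_pos[of F i, OF assms] by (simp add: sum_divide_distrib[symmetric])
  then show ?thesis using layer_step_avg[of w F x "\<lambda>_. 1"] by simp
qed

lemma layer_step_avg_hat:
  assumes "\<And>j. F j > 0"
  shows "(\<Sum>y\<in>UNIV. layer_step w F x y * hat w y)
    = hat w x + 1 / real CARD('n) * (\<Sum>k\<in>UNIV. \<pi> k *
        ((\<Sum>l\<in>UNIV. w k l * F l / (\<Sum>m\<in>UNIV. w k m * F m) * of_bool (x l)) - of_bool (x k)))"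
proof -
  define q where "q k l = w k l * F l / (\<Sum>m\<in>UNIV. w k m * F m)" for k l
  have row: "(\<Sum>l\<in>UNIV. q k l) = 1" for k
    using weighted_strength_pos[of F k, OF assms] unfolding q_def by (simp add: sum_divide_distrib[symmetric])
  have "(\<Sum>l\<in>UNIV. q k l * hat w (x(k := x l)))
      = hat w x + \<pi> k * ((\<Sum>l\<in>UNIV. q k l * of_bool (x l)) - of_bool (x k))" for k
  proof -
    have "(\<Sum>l\<in>UNIV. q k l * hat w (x(k := x l)))
        = (\<Sum>l\<in>UNIV. q k l * hat w x + \<pi> k * (q k l * of_bool (x l)) - \<pi> k * of_bool (x k) * q k l)"
      by (rule sum.cong) (simp_all add: hat_fun_upd algebra_simps)
    also have "\<dots> = hat w x * (\<Sum>l\<in>UNIV. q k l) + \<pi> k * (\<Sum>l\<in>UNIV. q k l * of_bool (x l))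
        - \<pi> k * of_bool (x k) * (\<Sum>l\<in>UNIV. q k l)"
      by (simp add: sum.distrib sum_subtractf sum_distrib_left mult_ac del: sum_mult_of_bool_eq sum_of_bool_mult_eq)
    finally show ?thesis by (simp add: row algebra_simps)
  qed
  then have "(\<Sum>k\<in>UNIV. \<Sum>l\<in>UNIV. q k l * hat w (x(k := x l)))
      = real CARD('n) * hat w x + (\<Sum>k\<in>UNIV. \<pi> k * ((\<Sum>l\<in>UNIV. q k l * of_bool (x l)) - of_bool (x k)))"
    by (simp add: sum.distrib)
  then show ?thesis unfolding layer_step_avg q_def[symmetric] by (simp add: field_simps)
qed

lemma tprob_fecundity_has_deriv:
  "((\<lambda>\<delta>. w i j * (1 + \<delta> * p j) / (\<Sum>k\<in>UNIV. w i k * (1 + \<delta> * p k)))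
     has_real_derivative P i j * (p j - (\<Sum>k\<in>UNIV. P i k * p k))) (at 0)"
proof -
  define S where "S = strength w i"
  have S_pos: "S > 0" unfolding S_def by (rule strength_pos)
  have num: "((\<lambda>\<delta>. w i j * (1 + \<delta> * p j)) has_real_derivative w i j * p j) (at 0)"
    by (auto intro!: derivative_eq_intros)
  have den: "((\<lambda>\<delta>. \<Sum>k\<in>UNIV. w i k * (1 + \<delta> * p k)) has_real_derivative (\<Sum>k\<in>UNIV. w i k * p k)) (at 0)"
    by (auto intro!: derivative_eq_intros simp: mult.commute)
  have den_0: "(\<Sum>k\<in>UNIV. w i k * (1 + 0 * p k)) = S" unfolding S_def strength_def by simp
  have "((\<lambda>\<delta>. w i j * (1 + \<delta> * p j) / (\<Sum>k\<in>UNIV. w i k * (1 + \<delta> * p k))) has_real_derivative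
     (w i j * p j * S - (\<Sum>k\<in>UNIV. w i k * p k) * (w i j * (1 + 0 * p j))) / S ^ Suc (Suc 0)) (at 0)"
    using DERIV_quotient[OF num den] den_0 S_pos by simp
  moreover have "(\<Sum>k\<in>UNIV. P i k * p k) = (\<Sum>k\<in>UNIV. w i k * p k) / S"
    unfolding tprob_def S_def by (simp add: sum_divide_distrib)
  then have "(w i j * p j * S - (\<Sum>k\<in>UNIV. w i k * p k) * (w i j * (1 + 0 * p j))) / S ^ Suc (Suc 0)
      = P i j * (p j - (\<Sum>k\<in>UNIV. P i k * p k))"
    unfolding tprob_def S_def[symmetric] using S_pos by (simp add: field_simps power2_eq_square)
  ultimately show ?thesis by simp
qed

lemma layer_step_differentiable:
  "\<exists>D. ((\<lambda>\<delta>. layer_step w (\<lambda>j. 1 + \<delta> * p j) x y) has_real_derivative D) (at 0)"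
proof -
  have "((\<lambda>\<delta>. 1 / real CARD('n) * (\<Sum>i\<in>UNIV. \<Sum>j\<in>UNIV.
      if y = x(i := x j) then w i j * (1 + \<delta> * p j) / (\<Sum>k\<in>UNIV. w i k * (1 + \<delta> * p k)) else 0))
    has_real_derivative 1 / real CARD('n) * (\<Sum>i\<in>UNIV. \<Sum>j\<in>UNIV.
      if y = x(i := x j) then P i j * (p j - (\<Sum>k\<in>UNIV. P i k * p k)) else 0)) (at 0)"
    by (intro DERIV_cmult DERIV_sum DERIV_if_const tprob_fecundity_has_deriv)
  then show ?thesis unfolding layer_step_def by blast
qed

end

locale two_layer_game = connected_graph_pair w1 w2 for w1 w2 :: "'n::finite \<Rightarrow> 'n \<Rightarrow> real" +
  fixes b c r :: real
begin

abbreviation "T \<equiv> trans b c r w1 w2"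

lemma trans_0_avg: "(\<Sum>u\<in>UNIV. T 0 s u * G u) = neutral_avg2 G s"
  unfolding trans_avg neutral_avg2_def fecundity_0 tprob_def strength_def by simp

definition payoff_bound :: real where "payoff_bound = \<bar>c\<bar> + \<bar>b\<bar> + \<bar>r - 1\<bar> + 1"

lemma abs_payoff_le: "\<bar>payoff b c r w1 s i\<bar> \<le> payoff_bound"
proof -
  have "\<bar>\<Sum>j\<in>UNIV. b * tprob w1 i j * of_bool (fst s j)\<bar> \<le> (\<Sum>j\<in>UNIV. \<bar>b\<bar> * tprob w1 i j)"
    by (rule order_trans[OF sum_abs]) (rule sum_mono, simp add: abs_mult g1.P_nonneg mult_left_mono)
  also have "\<dots> = \<bar>b\<bar>" by (simp add: sum_distrib_left[symmetric] g1.P_row_sum)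
  finally show ?thesis unfolding payoff_def payoff_bound_def by (simp add: abs_mult) linarith
qed

text \<open>Below \<open>\<delta>\<^sub>0\<close> all fecundities are positive, so that \<^term>\<open>T \<delta>\<close> is a stochastic matrix.\<close>

definition \<delta>\<^sub>0 :: real where "\<delta>\<^sub>0 = 1 / payoff_bound"

lemma \<delta>\<^sub>0_pos: "\<delta>\<^sub>0 > 0" unfolding \<delta>\<^sub>0_def payoff_bound_def by simp

lemma fecundity_pos:
  assumes "0 \<le> \<delta>" "\<delta> < \<delta>\<^sub>0"
  shows "fecundity b c r w1 \<delta> s i > 0"
proof -
  have "\<delta> * payoff_bound < 1" using assms unfolding \<delta>\<^sub>0_def payoff_bound_def by (simp add: field_simps)
  moreover have "\<bar>\<delta> * payoff b c r w1 s i\<bar> \<le> \<delta> * payoff_bound"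
    using abs_payoff_le[of s i] assms(1) by (simp add: abs_mult mult_left_mono)
  ultimately show ?thesis unfolding fecundity_def by linarith
qed

lemma trans_nonneg:
  assumes "0 \<le> \<delta>" "\<delta> < \<delta>\<^sub>0"
  shows "T \<delta> s u \<ge> 0"
  unfolding trans_def using fecundity_pos[OF assms]
  by (intro mult_nonneg_nonneg g1.layer_step_nonneg g2.layer_step_nonneg) auto

lemma trans_row_sum:
  assumes "0 \<le> \<delta>" "\<delta> < \<delta>\<^sub>0"
  shows "(\<Sum>u\<in>UNIV. T \<delta> s u) = 1"
proof -
  have F: "\<And>j. fecundity b c r w1 \<delta> s j > 0" using fecundity_pos[OF assms] .
  have "(\<Sum>u\<in>UNIV. T \<delta> s u) = (\<Sum>u1\<in>UNIV. layer_step w1 (fecundity b c r w1 \<delta> s) (fst s) u1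
        * (\<Sum>u2\<in>UNIV. layer_step w2 (fecundity b c r w1 \<delta> s) (snd s) u2))"
    unfolding sum_UNIV_prod[of "T \<delta> s"] unfolding trans_def by (simp add: sum_distrib_left)
  then show ?thesis using g1.layer_step_row_sum[OF F] g2.layer_step_row_sum[OF F] by simp
qed

lemma trans_keeps_constant_layer2:
  assumes "T \<delta> s u \<noteq> 0" "\<forall>i. snd s i = v"
  shows "snd u = snd s"
proof -
  have "layer_step w2 (fecundity b c r w1 \<delta> s) (snd s) (snd u) \<noteq> 0"
    using assms(1) unfolding trans_def by auto
  then obtain i j where "snd u = (snd s)(i := snd s j)" by (rule layer_step_nonzero_imp_upd)
  then show ?thesis using assms(2) by (auto simp: fun_eq_iff)
qed

section \<open>The Poisson equation\<close>

definition walk_kernel :: "nat \<Rightarrow> nat \<Rightarrow> 'n \<Rightarrow> 'n \<Rightarrow> real" where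
  "walk_kernel n m i j = (\<Sum>k\<in>UNIV. mpow g2.P n i k * mpow g1.P m k j)"

lemma walk_kernel_weights_sum: "(\<Sum>i\<in>UNIV. \<Sum>j\<in>UNIV. g2.\<pi> i * walk_kernel n m i j) = 1"
proof -
  have "(\<Sum>j\<in>UNIV. walk_kernel n m i j) = (\<Sum>k\<in>UNIV. mpow g2.P n i k * (\<Sum>j\<in>UNIV. mpow g1.P m k j))" for i
    unfolding walk_kernel_def by (simp add: sum_distrib_left) (rule sum.swap)
  then show ?thesis by (simp add: g1.mpow_row_sum g2.mpow_row_sum sum_distrib_left[symmetric] g2.pi_sum)
qed

lemma neutral_avg_thetaT:
  "g2.neutral_avg (\<lambda>y. thetaT w2 y n) x = thetaT w2 x n
   - ((\<Sum>i\<in>UNIV. \<Sum>j\<in>UNIV. g2.\<pi> i * mpow g2.P n i j * (of_bool (x i) * of_bool (x j))) - hat w2 x)"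
proof -
  have weights: "(\<Sum>i\<in>UNIV. \<Sum>j\<in>UNIV. g2.\<pi> i * mpow g2.P n i j) = 1"
    by (simp add: sum_distrib_left[symmetric] g2.mpow_row_sum g2.pi_sum)
  have theta: "thetaT w2 y n = (\<Sum>i\<in>UNIV. \<Sum>j\<in>UNIV. (g2.\<pi> i * mpow g2.P n i j) * betaT w2 y i j)" for y
    unfolding thetaT_def by simp
  have "g2.neutral_avg (\<lambda>y. thetaT w2 y n) x
      = (\<Sum>i\<in>UNIV. \<Sum>j\<in>UNIV. (g2.\<pi> i * mpow g2.P n i j) * g2.neutral_avg (\<lambda>y. betaT w2 y i j) x)"
    unfolding theta by (simp only: g2.neutral_avg_sum[OF finite] g2.neutral_avg_scale)
  also have "\<dots> = (\<Sum>i\<in>UNIV. \<Sum>j\<in>UNIV. (g2.\<pi> i * mpow g2.P n i j) * betaT w2 x i j)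
     - ((\<Sum>i\<in>UNIV. \<Sum>j\<in>UNIV. g2.\<pi> i * mpow g2.P n i j * (of_bool (x i) * of_bool (x j)))
        - (\<Sum>i\<in>UNIV. \<Sum>j\<in>UNIV. g2.\<pi> i * mpow g2.P n i j) * hat w2 x)"
    by (simp add: g2.neutral_avg_betaT right_diff_distrib sum_subtractf sum_distrib_right mult.assoc
        del: sum_mult_of_bool_eq sum_of_bool_mult_eq)
  finally show ?thesis unfolding theta weights by simp
qed

lemma neutral_avg2_phiT:
  "neutral_avg2 (\<lambda>u. phiT w1 w2 u n m) s = phiT w1 w2 s n m
   - ((\<Sum>i\<in>UNIV. \<Sum>j\<in>UNIV. g2.\<pi> i * walk_kernel n m i j * (of_bool (snd s i) * of_bool (fst s j))) - hat_both s)"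
proof -
  have phi: "phiT w1 w2 u n m = (\<Sum>i\<in>UNIV. \<Sum>j\<in>UNIV. (g2.\<pi> i * walk_kernel n m i j) * gammaT w1 w2 u i j)" for u
    unfolding phiT_def walk_kernel_def by simp
  have "neutral_avg2 (\<lambda>u. phiT w1 w2 u n m) s
      = (\<Sum>i\<in>UNIV. \<Sum>j\<in>UNIV. (g2.\<pi> i * walk_kernel n m i j) * neutral_avg2 (\<lambda>u. gammaT w1 w2 u i j) s)"
    unfolding phi by (simp only: neutral_avg2_sum[OF finite] neutral_avg2_scale)
  also have "\<dots> = (\<Sum>i\<in>UNIV. \<Sum>j\<in>UNIV. (g2.\<pi> i * walk_kernel n m i j) * gammaT w1 w2 s i j)
     - ((\<Sum>i\<in>UNIV. \<Sum>j\<in>UNIV. g2.\<pi> i * walk_kernel n m i j * (of_bool (snd s i) * of_bool (fst s j)))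
        - (\<Sum>i\<in>UNIV. \<Sum>j\<in>UNIV. g2.\<pi> i * walk_kernel n m i j) * hat_both s)"
    by (simp add: neutral_avg2_gammaT right_diff_distrib sum_subtractf sum_distrib_right mult.assoc
        del: sum_mult_of_bool_eq sum_of_bool_mult_eq)
  finally show ?thesis unfolding phi walk_kernel_weights_sum by simp
qed

definition psi :: "'n state \<Rightarrow> real" where
  "psi s = 1 / real CARD('n) * (- (r - 1) * thetaT w2 (snd s) 2 + c * phiT w1 w2 s 2 0
      + b * (phiT w1 w2 s 0 1 - phiT w1 w2 s 2 1))"

text \<open>\<^term>\<open>drift_deriv s\<close> is the derivative at \<open>\<delta> = 0\<close> of the expected one-step change of
  \<^term>\<open>hat w2 (snd s)\<close>.\<close>

definition drift_deriv :: "'n state \<Rightarrow> real" where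
  "drift_deriv s = 1 / real CARD('n) * (\<Sum>k\<in>UNIV. g2.\<pi> k * (\<Sum>l\<in>UNIV. g2.P k l *
      (payoff b c r w1 s l - (\<Sum>m\<in>UNIV. g2.P k m * payoff b c r w1 s m)) * of_bool (snd s l)))"

lemma neutral_avg2_psi: "neutral_avg2 psi s = psi s - 1 / real CARD('n) * (
     - (r - 1) * ((\<Sum>i\<in>UNIV. \<Sum>j\<in>UNIV. g2.\<pi> i * mpow g2.P 2 i j * (of_bool (snd s i) * of_bool (snd s j))) - hat w2 (snd s))
     + c * ((\<Sum>i\<in>UNIV. \<Sum>j\<in>UNIV. g2.\<pi> i * walk_kernel 2 0 i j * (of_bool (snd s i) * of_bool (fst s j))) - hat_both s)
     + b * ((\<Sum>i\<in>UNIV. \<Sum>j\<in>UNIV. g2.\<pi> i * walk_kernel 0 1 i j * (of_bool (snd s i) * of_bool (fst s j)))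
          - (\<Sum>i\<in>UNIV. \<Sum>j\<in>UNIV. g2.\<pi> i * walk_kernel 2 1 i j * (of_bool (snd s i) * of_bool (fst s j)))))"
proof -
  have "neutral_avg2 psi s = 1 / real CARD('n) * (- (r - 1) * neutral_avg2 (\<lambda>u. thetaT w2 (snd u) 2) s
      + c * neutral_avg2 (\<lambda>u. phiT w1 w2 u 2 0) s
      + b * (neutral_avg2 (\<lambda>u. phiT w1 w2 u 0 1) s - neutral_avg2 (\<lambda>u. phiT w1 w2 u 2 1) s))"
    unfolding psi_def by (simp only: neutral_avg2_scale neutral_avg2_add neutral_avg2_diff)
  moreover have "neutral_avg2 (\<lambda>u. thetaT w2 (snd u) 2) s = g2.neutral_avg (\<lambda>y. thetaT w2 y 2) (snd s)"
    by (rule neutral_avg2_snd)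
  ultimately show ?thesis
    unfolding neutral_avg_thetaT neutral_avg2_phiT psi_def by (simp add: algebra_simps)
qed

definition two_step_contrast :: "'n state \<Rightarrow> ('n \<Rightarrow> real) \<Rightarrow> real" where
  "two_step_contrast s f = (\<Sum>l\<in>UNIV. g2.\<pi> l * f l * of_bool (snd s l))
     - (\<Sum>m\<in>UNIV. \<Sum>l\<in>UNIV. g2.\<pi> m * mpow g2.P 2 m l * f m * of_bool (snd s l))"

lemma drift_deriv_eq_contrast: "drift_deriv s = 1 / real CARD('n) * two_step_contrast s (payoff b c r w1 s)"
proof -
  define u where "u = payoff b c r w1 s"
  define X where "X l = (of_bool (snd s l) :: real)" for l
  have centred: "(\<Sum>l\<in>UNIV. g2.P k l * (u l - (\<Sum>m\<in>UNIV. g2.P k m * u m)) * X l)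
      = (\<Sum>l\<in>UNIV. g2.P k l * (u l * X l)) - (\<Sum>m\<in>UNIV. g2.P k m * u m) * (\<Sum>l\<in>UNIV. g2.P k l * X l)" for k
  proof -
    define A where "A = (\<Sum>m\<in>UNIV. g2.P k m * u m)"
    have "(\<Sum>l\<in>UNIV. g2.P k l * (u l - A) * X l) = (\<Sum>l\<in>UNIV. g2.P k l * (u l * X l) - A * (g2.P k l * X l))"
      by (rule sum.cong) (simp_all add: algebra_simps)
    also have "\<dots> = (\<Sum>l\<in>UNIV. g2.P k l * (u l * X l)) - A * (\<Sum>l\<in>UNIV. g2.P k l * X l)"
      by (simp add: sum_subtractf sum_distrib_left)
    finally show ?thesis unfolding A_def .
  qed
  have "(\<Sum>k\<in>UNIV. g2.\<pi> k * (\<Sum>l\<in>UNIV. g2.P k l * (u l - (\<Sum>m\<in>UNIV. g2.P k m * u m)) * X l))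
      = (\<Sum>k\<in>UNIV. g2.\<pi> k * (\<Sum>l\<in>UNIV. g2.P k l * (u l * X l)))
        - (\<Sum>k\<in>UNIV. g2.\<pi> k * ((\<Sum>m\<in>UNIV. g2.P k m * u m) * (\<Sum>l\<in>UNIV. g2.P k l * X l)))"
    unfolding centred by (simp only: right_diff_distrib sum_subtractf)
  also have "\<dots> = (\<Sum>l\<in>UNIV. g2.\<pi> l * (u l * X l)) - (\<Sum>m\<in>UNIV. \<Sum>l\<in>UNIV. g2.\<pi> m * mpow g2.P 2 m l * u m * X l)"
    by (simp only: g2.stationary_avg g2.stationary_two_step)
  finally show ?thesis unfolding drift_deriv_def two_step_contrast_def u_def[symmetric] X_def by (simp add: mult.assoc)
qed

lemma two_step_contrast_const: "two_step_contrast s (\<lambda>l. a) = 0"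
proof -
  have "(\<Sum>m\<in>UNIV. \<Sum>l\<in>UNIV. g2.\<pi> m * mpow g2.P 2 m l * a * of_bool (snd s l))
      = (\<Sum>l\<in>UNIV. (\<Sum>m\<in>UNIV. g2.\<pi> m * mpow g2.P 2 m l) * a * of_bool (snd s l))"
    by (subst sum.swap) (simp add: sum_distrib_right)
  then show ?thesis unfolding two_step_contrast_def by (simp add: g2.mpow_stationary del: sum_mult_of_bool_eq)
qed

lemma two_step_contrast_linear:
  "two_step_contrast s (\<lambda>l. a1 * f1 l + a2 * f2 l + a3 * f3 l + a4 * f4 l)
   = a1 * two_step_contrast s f1 + a2 * two_step_contrast s f2 + a3 * two_step_contrast s f3 + a4 * two_step_contrast s f4"
  unfolding two_step_contrast_def by (simp add: algebra_simps sum.distrib sum_subtractf sum_distrib_left)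

lemma two_step_contrast_payoff: "two_step_contrast s (payoff b c r w1 s)
   = (-c) * two_step_contrast s (\<lambda>l. of_bool (fst s l))
   + b * two_step_contrast s (\<lambda>l. \<Sum>j\<in>UNIV. g1.P l j * of_bool (fst s j))
   + (r - 1) * two_step_contrast s (\<lambda>l. of_bool (snd s l))"
proof -
  have "payoff b c r w1 s = (\<lambda>l. (-c) * of_bool (fst s l) + b * (\<Sum>j\<in>UNIV. g1.P l j * of_bool (fst s j))
     + (r - 1) * of_bool (snd s l) + 1 * 1)"
    unfolding payoff_def
    by (rule ext) (simp add: sum_distrib_left mult.assoc del: sum_mult_of_bool_eq sum_of_bool_mult_eq)
  then have "two_step_contrast s (payoff b c r w1 s)
     = (-c) * two_step_contrast s (\<lambda>l. of_bool (fst s l))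
     + b * two_step_contrast s (\<lambda>l. \<Sum>j\<in>UNIV. g1.P l j * of_bool (fst s j))
     + (r - 1) * two_step_contrast s (\<lambda>l. of_bool (snd s l)) + 1 * two_step_contrast s (\<lambda>l. 1)"
    by (simp only: two_step_contrast_linear)
  then show ?thesis by (simp add: two_step_contrast_const)
qed

lemma two_step_contrast_indicator2: "two_step_contrast s (\<lambda>l. of_bool (snd s l)) = hat w2 (snd s)
   - (\<Sum>i\<in>UNIV. \<Sum>j\<in>UNIV. g2.\<pi> i * mpow g2.P 2 i j * (of_bool (snd s i) * of_bool (snd s j)))"
proof -
  have square: "of_bool b * of_bool b = (of_bool b :: real)" for b by simp
  show ?thesis unfolding two_step_contrast_def hat_def
    by (simp add: mult.assoc square del: sum_mult_of_bool_eq sum_of_bool_mult_eq)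
qed

lemma two_step_contrast_indicator1: "two_step_contrast s (\<lambda>l. of_bool (fst s l)) = hat_both s
   - (\<Sum>i\<in>UNIV. \<Sum>j\<in>UNIV. g2.\<pi> i * walk_kernel 2 0 i j * (of_bool (snd s i) * of_bool (fst s j)))"
proof -
  have kernel: "walk_kernel 2 0 i j = mpow g2.P 2 i j" for i j unfolding walk_kernel_def by simp
  have "(\<Sum>m\<in>UNIV. \<Sum>l\<in>UNIV. g2.\<pi> m * mpow g2.P 2 m l * of_bool (fst s m) * of_bool (snd s l))
     = (\<Sum>m\<in>UNIV. \<Sum>l\<in>UNIV. g2.\<pi> l * mpow g2.P 2 l m * (of_bool (snd s l) * of_bool (fst s m)))"
    by (rule sum.cong[OF refl], rule sum.cong[OF refl]) (simp add: g2.mpow_2_reversible[of _ "_"] mult_ac)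
  also have "\<dots> = (\<Sum>l\<in>UNIV. \<Sum>m\<in>UNIV. g2.\<pi> l * mpow g2.P 2 l m * (of_bool (snd s l) * of_bool (fst s m)))"
    by (rule sum.swap)
  finally show ?thesis unfolding two_step_contrast_def hat_both_def kernel by (simp add: mult_ac)
qed

lemma two_step_contrast_neighbours: "two_step_contrast s (\<lambda>l. \<Sum>j\<in>UNIV. g1.P l j * of_bool (fst s j))
   = (\<Sum>i\<in>UNIV. \<Sum>j\<in>UNIV. g2.\<pi> i * walk_kernel 0 1 i j * (of_bool (snd s i) * of_bool (fst s j)))
   - (\<Sum>i\<in>UNIV. \<Sum>j\<in>UNIV. g2.\<pi> i * walk_kernel 2 1 i j * (of_bool (snd s i) * of_bool (fst s j)))"
proof -
  have kernel_01: "walk_kernel 0 1 i j = g1.P i j" for i j unfolding walk_kernel_def by simp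
  have kernel_21: "walk_kernel 2 1 i j = (\<Sum>k\<in>UNIV. mpow g2.P 2 i k * g1.P k j)" for i j
    unfolding walk_kernel_def by simp
  have first: "(\<Sum>l\<in>UNIV. g2.\<pi> l * (\<Sum>j\<in>UNIV. g1.P l j * of_bool (fst s j)) * of_bool (snd s l))
     = (\<Sum>i\<in>UNIV. \<Sum>j\<in>UNIV. g2.\<pi> i * g1.P i j * (of_bool (snd s i) * of_bool (fst s j)))"
    by (simp add: sum_distrib_left sum_distrib_right mult_ac del: sum_mult_of_bool_eq sum_of_bool_mult_eq)
  have "(\<Sum>m\<in>UNIV. \<Sum>l\<in>UNIV. g2.\<pi> m * mpow g2.P 2 m l * (\<Sum>j\<in>UNIV. g1.P m j * of_bool (fst s j)) * of_bool (snd s l))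
     = (\<Sum>m\<in>UNIV. \<Sum>l\<in>UNIV. \<Sum>j\<in>UNIV. g2.\<pi> l * mpow g2.P 2 l m * g1.P m j * (of_bool (snd s l) * of_bool (fst s j)))"
    by (rule sum.cong[OF refl], rule sum.cong[OF refl])
      (simp add: g2.mpow_2_reversible[of _ "_"] sum_distrib_left sum_distrib_right mult_ac
        del: sum_mult_of_bool_eq sum_of_bool_mult_eq)
  also have "\<dots> = (\<Sum>l\<in>UNIV. \<Sum>j\<in>UNIV. \<Sum>m\<in>UNIV. g2.\<pi> l * mpow g2.P 2 l m * g1.P m j * (of_bool (snd s l) * of_bool (fst s j)))"
    by (subst sum.swap) (rule sum.cong[OF refl], rule sum.swap)
  also have "\<dots> = (\<Sum>i\<in>UNIV. \<Sum>j\<in>UNIV. g2.\<pi> i * (\<Sum>k\<in>UNIV. mpow g2.P 2 i k * g1.P k j) * (of_bool (snd s i) * of_bool (fst s j)))"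
    by (simp add: sum_distrib_left sum_distrib_right mult_ac del: sum_mult_of_bool_eq sum_of_bool_mult_eq)
  finally have second: "(\<Sum>m\<in>UNIV. \<Sum>l\<in>UNIV. g2.\<pi> m * mpow g2.P 2 m l
      * (\<Sum>j\<in>UNIV. g1.P m j * of_bool (fst s j)) * of_bool (snd s l))
    = (\<Sum>i\<in>UNIV. \<Sum>j\<in>UNIV. g2.\<pi> i * (\<Sum>k\<in>UNIV. mpow g2.P 2 i k * g1.P k j) * (of_bool (snd s i) * of_bool (fst s j)))" .
  show ?thesis unfolding two_step_contrast_def first second kernel_01 kernel_21 ..
qed

lemma psi_poisson: "psi s - neutral_avg2 psi s = drift_deriv s"
proof -
  have "psi s - neutral_avg2 psi s = 1 / real CARD('n) * (
     - (r - 1) * ((\<Sum>i\<in>UNIV. \<Sum>j\<in>UNIV. g2.\<pi> i * mpow g2.P 2 i j * (of_bool (snd s i) * of_bool (snd s j))) - hat w2 (snd s))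
     + c * ((\<Sum>i\<in>UNIV. \<Sum>j\<in>UNIV. g2.\<pi> i * walk_kernel 2 0 i j * (of_bool (snd s i) * of_bool (fst s j))) - hat_both s)
     + b * ((\<Sum>i\<in>UNIV. \<Sum>j\<in>UNIV. g2.\<pi> i * walk_kernel 0 1 i j * (of_bool (snd s i) * of_bool (fst s j)))
          - (\<Sum>i\<in>UNIV. \<Sum>j\<in>UNIV. g2.\<pi> i * walk_kernel 2 1 i j * (of_bool (snd s i) * of_bool (fst s j)))))"
    unfolding neutral_avg2_psi by simp
  also have "\<dots> = drift_deriv s"
    unfolding drift_deriv_eq_contrast two_step_contrast_payoff two_step_contrast_indicator2
      two_step_contrast_indicator1 two_step_contrast_neighbours
    by (simp add: algebra_simps)
  finally show ?thesis .
qed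

section \<open>Fixation probabilities\<close>

definition mutants_fixed :: "'n state set" where "mutants_fixed = {s. \<forall>i. snd s i}"

definition fix_by :: "real \<Rightarrow> nat \<Rightarrow> 'n state \<Rightarrow> real" where
  "fix_by \<delta> t s = (\<Sum>s'\<in>mutants_fixed. nstep (T \<delta>) t s s')"

lemma fix_by_0: "fix_by \<delta> 0 s = of_bool (s \<in> mutants_fixed)"
  unfolding fix_by_def by (simp add: of_bool_def sum.If_cases[symmetric])

lemma fix_by_Suc: "fix_by \<delta> (Suc t) s = (\<Sum>u\<in>UNIV. T \<delta> s u * fix_by \<delta> t u)"
proof -
  have "fix_by \<delta> (Suc t) s = (\<Sum>s'\<in>mutants_fixed. \<Sum>u\<in>UNIV. T \<delta> s u * nstep (T \<delta>) t u s')"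
    unfolding fix_by_def by simp
  also have "\<dots> = (\<Sum>u\<in>UNIV. T \<delta> s u * fix_by \<delta> t u)"
    unfolding fix_by_def by (subst sum.swap) (simp add: sum_distrib_left)
  finally show ?thesis .
qed

context
  fixes \<delta> :: real
  assumes weak: "0 \<le> \<delta>" "\<delta> < \<delta>\<^sub>0"
begin

lemma trans_avg_mono: "(\<And>u. f u \<le> g u) \<Longrightarrow> (\<Sum>u\<in>UNIV. T \<delta> s u * f u) \<le> (\<Sum>u\<in>UNIV. T \<delta> s u * g u)"
  by (rule sum_mono) (simp add: trans_nonneg[OF weak] mult_left_mono)

lemma trans_avg_eq_on_support: "(\<And>u. T \<delta> s u \<noteq> 0 \<Longrightarrow> f u = a) \<Longrightarrow> (\<Sum>u\<in>UNIV. T \<delta> s u * f u) = a"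
proof -
  assume support: "\<And>u. T \<delta> s u \<noteq> 0 \<Longrightarrow> f u = a"
  have "(\<Sum>u\<in>UNIV. T \<delta> s u * f u) = (\<Sum>u\<in>UNIV. T \<delta> s u * a)"
    by (rule sum.cong[OF refl]) (metis support mult_zero_left)
  also have "\<dots> = a" by (simp add: sum_distrib_right[symmetric] trans_row_sum[OF weak])
  finally show ?thesis .
qed

lemma fix_by_fixed: "s \<in> mutants_fixed \<Longrightarrow> fix_by \<delta> t s = 1"
proof (induction t arbitrary: s)
  case (Suc t)
  have "u \<in> mutants_fixed" if "T \<delta> s u \<noteq> 0" for u
    using trans_keeps_constant_layer2[OF that, of True] Suc.prems unfolding mutants_fixed_def by auto
  then show ?case unfolding fix_by_Suc by (intro trans_avg_eq_on_support) (simp add: Suc.IH)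
qed (simp add: fix_by_0)

lemma fix_by_lost: "\<forall>i. \<not> snd s i \<Longrightarrow> fix_by \<delta> t s = 0"
proof (induction t arbitrary: s)
  case 0
  then have "s \<notin> mutants_fixed" unfolding mutants_fixed_def by auto
  then show ?case by (simp add: fix_by_0)
next
  case (Suc t)
  have "\<forall>i. \<not> snd u i" if "T \<delta> s u \<noteq> 0" for u
    using trans_keeps_constant_layer2[OF that, of False] Suc.prems by auto
  then show ?case unfolding fix_by_Suc by (intro trans_avg_eq_on_support) (simp add: Suc.IH)
qed

lemma fix_by_nonneg: "fix_by \<delta> t s \<ge> 0"
  by (induction t arbitrary: s) (simp_all add: fix_by_0 fix_by_Suc sum_nonneg trans_nonneg[OF weak])

lemma fix_by_le_1: "fix_by \<delta> t s \<le> 1"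
proof (induction t arbitrary: s)
  case (Suc t)
  show ?case unfolding fix_by_Suc
    by (rule convex_comb_le) (auto simp: trans_nonneg[OF weak] trans_row_sum[OF weak] Suc)
qed (simp add: fix_by_0)

lemma fix_by_mono: "fix_by \<delta> t s \<le> fix_by \<delta> (Suc t) s"
proof (induction t arbitrary: s)
  case 0
  show ?case
    using fix_by_fixed[of s 1] fix_by_nonneg[of 1 s] by (cases "s \<in> mutants_fixed") (simp_all add: fix_by_0)
next
  case (Suc t)
  show ?case unfolding fix_by_Suc[of \<delta> "Suc t" s] fix_by_Suc[of \<delta> t s] by (rule trans_avg_mono) (rule Suc)
qed

lemma fix_by_tendsto: "(\<lambda>t. fix_by \<delta> t s) \<longlonglongrightarrow> rho2 b c r w1 w2 \<delta> s"
proof -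
  have "incseq (\<lambda>t. fix_by \<delta> t s)" by (rule incseq_SucI) (rule fix_by_mono)
  moreover have "bdd_above (range (\<lambda>t. fix_by \<delta> t s))"
    by (rule bdd_aboveI[where M = 1]) (auto simp: fix_by_le_1)
  ultimately have "convergent (\<lambda>t. fix_by \<delta> t s)"
    using LIMSEQ_incseq_SUP convergent_def by blast
  then show ?thesis unfolding rho2_def fix_by_def[symmetric] mutants_fixed_def[symmetric]
    by (rule convergent_LIMSEQ_iff[THEN iffD1])
qed

lemma rho2_harmonic: "rho2 b c r w1 w2 \<delta> s = (\<Sum>u\<in>UNIV. T \<delta> s u * rho2 b c r w1 w2 \<delta> u)"
proof (rule LIMSEQ_unique)
  show "(\<lambda>t. fix_by \<delta> (Suc t) s) \<longlonglongrightarrow> rho2 b c r w1 w2 \<delta> s"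
    using fix_by_tendsto by (rule LIMSEQ_Suc)
  show "(\<lambda>t. fix_by \<delta> (Suc t) s) \<longlonglongrightarrow> (\<Sum>u\<in>UNIV. T \<delta> s u * rho2 b c r w1 w2 \<delta> u)"
    unfolding fix_by_Suc by (intro tendsto_sum tendsto_mult_left fix_by_tendsto)
qed

lemma rho2_monomorphic:
  assumes "monomorphic (snd s)"
  shows "rho2 b c r w1 w2 \<delta> s = hat w2 (snd s)"
proof (cases "\<forall>i. snd s i")
  case True
  then have "s \<in> mutants_fixed" unfolding mutants_fixed_def by simp
  then have "rho2 b c r w1 w2 \<delta> s = 1"
    using fix_by_tendsto[of s] fix_by_fixed[of s] by (simp add: LIMSEQ_const_iff)
  then show ?thesis using g2.hat_constant[of "snd s" True] True by simp
next
  case False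
  then have "\<forall>i. \<not> snd s i" using assms unfolding monomorphic_def by blast
  then have "rho2 b c r w1 w2 \<delta> s = 0"
    using fix_by_tendsto[of s] fix_by_lost[of s] by (simp add: LIMSEQ_const_iff)
  then show ?thesis using g2.hat_constant[of "snd s" False] \<open>\<forall>i. \<not> snd s i\<close> by simp
qed

end

definition absorbing :: "'n state set" where
  "absorbing = {s. monomorphic (fst s) \<and> monomorphic (snd s)}"

lemma psi_absorbing:
  assumes "s \<in> absorbing"
  shows "psi s = 0"
proof -
  obtain v1 v2 where v: "\<forall>i. fst s i = v1" "\<forall>i. snd s i = v2"
    using assms unfolding absorbing_def monomorphic_def by blast
  have "betaT w2 (snd s) = (\<lambda>i j. 0)"
    by (rule g2.betaT_eqI) (simp add: beta_sys_def v g2.hat_constant[OF v(2)])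
  moreover have "gammaT w1 w2 s = (\<lambda>i j. 0)"
    by (rule gammaT_eqI) (simp add: gamma_sys_def v g1.hat_constant[OF v(1)] g2.hat_constant[OF v(2)])
  ultimately show ?thesis unfolding psi_def thetaT_def phiT_def by simp
qed

abbreviation "distance s \<equiv> absorption_distance (fst s) + absorption_distance (snd s)"

lemma neutral_step_towards_absorbing:
  assumes "s \<notin> absorbing"
  obtains u where "T 0 s u > 0" "distance u < distance s"
proof -
  obtain a1 a1' where step1: "g1.P a1 a1' > 0" "absorption_distance ((fst s)(a1 := fst s a1')) \<le> absorption_distance (fst s)"
    "\<not> monomorphic (fst s) \<Longrightarrow> absorption_distance ((fst s)(a1 := fst s a1')) < absorption_distance (fst s)"
    by (rule g1.exists_neutral_step_towards_absorption[of "fst s"]) auto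
  obtain a2 a2' where step2: "g2.P a2 a2' > 0" "absorption_distance ((snd s)(a2 := snd s a2')) \<le> absorption_distance (snd s)"
    "\<not> monomorphic (snd s) \<Longrightarrow> absorption_distance ((snd s)(a2 := snd s a2')) < absorption_distance (snd s)"
    by (rule g2.exists_neutral_step_towards_absorption[of "snd s"]) auto
  define u where "u = ((fst s)(a1 := fst s a1'), (snd s)(a2 := snd s a2'))"
  have "T 0 s u > 0"
    unfolding trans_def fecundity_0 u_def
    using g1.layer_step_neutral_pos[OF step1(1)] g2.layer_step_neutral_pos[OF step2(1)] by simp
  moreover have "distance u < distance s"
    using step1(2,3) step2(2,3) assms unfolding u_def absorbing_def by fastforce
  ultimately show ?thesis by (rule that)
qed

text \<open>\<open>I - T\<^sub>0\<close> off the absorbing states and the identity on them. Since every state reaches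
  an absorbing one, the maximum principle makes this operator injective.\<close>

definition absorbed_op :: "('n state \<Rightarrow> real) \<Rightarrow> ('n state \<Rightarrow> real)" where
  "absorbed_op v s = (if s \<in> absorbing then v s else v s - (\<Sum>u\<in>UNIV. T 0 s u * v u))"

lemma absorbed_op_kernel_nonpos:
  assumes kernel: "absorbed_op v = (\<lambda>_. 0)"
  shows "v s \<le> 0"
proof (rule ccontr)
  assume "\<not> v s \<le> 0"
  obtain s0 where max: "\<And>x. v x \<le> v s0" using finite_UNIV_has_max by blast
  define M where "M = v s0"
  have le: "v x \<le> M" for x using max unfolding M_def .
  have M_pos: "M > 0" using le[of s] \<open>\<not> v s \<le> 0\<close> by simp
  have "v x \<noteq> M" for x
  proof (induction "distance x" arbitrary: x rule: less_induct)
    case less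
    show ?case
    proof (cases "x \<in> absorbing")
      case True
      then show ?thesis using fun_cong[OF kernel, of x] M_pos unfolding absorbed_op_def by simp
    next
      case False
      obtain u where u: "T 0 x u > 0" "distance u < distance x"
        using neutral_step_towards_absorbing[OF False] by blast
      show ?thesis
      proof
        assume "v x = M"
        then have "(\<Sum>u\<in>UNIV. T 0 x u * v u) = M"
          using fun_cong[OF kernel, of x] False unfolding absorbed_op_def by simp
        then have "v u = M"
          by (intro convex_comb_eq_max[of UNIV "T 0 x" v M])
            (use u \<delta>\<^sub>0_pos in \<open>auto simp: trans_nonneg trans_row_sum le\<close>)
        with less.hyps[OF u(2)] show False by simp
      qed
    qed
  qed
  then show False unfolding M_def by blast
qed

sublocale absorbed: injective_linear_op absorbed_op
proof
  show "absorbed_op (\<lambda>x. u x + v x) = (\<lambda>x. absorbed_op u x + absorbed_op v x)" for u v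
    unfolding absorbed_op_def by (rule ext) (simp add: distrib_left sum.distrib)
  show "absorbed_op (\<lambda>x. k * u x) = (\<lambda>x. k * absorbed_op u x)" for k u
    unfolding absorbed_op_def by (rule ext) (simp add: sum_distrib_left right_diff_distrib mult.left_commute)
next
  fix v :: "'n state \<Rightarrow> real"
  assume kernel: "absorbed_op v = (\<lambda>_. 0)"
  have "absorbed_op (\<lambda>x. - v x) s = - absorbed_op v s" for s
    unfolding absorbed_op_def by (simp add: sum_negf)
  then have "absorbed_op (\<lambda>x. - v x) = (\<lambda>_. 0)" using kernel by (simp add: fun_eq_iff)
  then have "v s \<le> 0" "- v s \<le> 0" for s
    using absorbed_op_kernel_nonpos[OF kernel] absorbed_op_kernel_nonpos by blast+
  then show "v = (\<lambda>_. 0)" by (auto simp: fun_eq_iff intro: antisym)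
qed

section \<open>The derivative at weak selection\<close>

lemma trans_differentiable: "\<exists>D. ((\<lambda>\<delta>. T \<delta> s u) has_real_derivative D) (at 0)"
proof -
  obtain D1 where D1: "((\<lambda>\<delta>. layer_step w1 (\<lambda>j. 1 + \<delta> * payoff b c r w1 s j) (fst s) (fst u))
      has_real_derivative D1) (at 0)"
    using g1.layer_step_differentiable by blast
  obtain D2 where D2: "((\<lambda>\<delta>. layer_step w2 (\<lambda>j. 1 + \<delta> * payoff b c r w1 s j) (snd s) (snd u))
      has_real_derivative D2) (at 0)"
    using g2.layer_step_differentiable by blast
  have "fecundity b c r w1 \<delta> s = (\<lambda>j. 1 + \<delta> * payoff b c r w1 s j)" for \<delta>
    unfolding fecundity_def ..
  then show ?thesis unfolding trans_def using DERIV_mult[OF D1 D2] by auto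
qed

definition drift :: "real \<Rightarrow> 'n state \<Rightarrow> real" where
  "drift \<delta> s = 1 / real CARD('n) * (\<Sum>k\<in>UNIV. g2.\<pi> k * ((\<Sum>l\<in>UNIV.
      w2 k l * (1 + \<delta> * payoff b c r w1 s l) / (\<Sum>m\<in>UNIV. w2 k m * (1 + \<delta> * payoff b c r w1 s m))
      * of_bool (snd s l)) - of_bool (snd s k)))"

lemma trans_avg_hat:
  assumes "0 \<le> \<delta>" "\<delta> < \<delta>\<^sub>0"
  shows "(\<Sum>u\<in>UNIV. T \<delta> s u * hat w2 (snd u)) = hat w2 (snd s) + drift \<delta> s"
proof -
  define F where "F = fecundity b c r w1 \<delta> s"
  have F_pos: "\<And>j. F j > 0" unfolding F_def by (rule fecundity_pos[OF assms])
  have "(\<Sum>u\<in>UNIV. T \<delta> s u * hat w2 (snd u))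
      = (\<Sum>u1\<in>UNIV. layer_step w1 F (fst s) u1) * (\<Sum>u2\<in>UNIV. layer_step w2 F (snd s) u2 * hat w2 u2)"
    unfolding sum_UNIV_prod[of "\<lambda>u. T \<delta> s u * hat w2 (snd u)"]
    unfolding trans_def F_def by (simp add: sum_distrib_left sum_distrib_right mult.assoc) (rule sum.swap)
  also have "\<dots> = hat w2 (snd s) + drift \<delta> s"
    unfolding g1.layer_step_row_sum[OF F_pos] g2.layer_step_avg_hat[OF F_pos]
    unfolding drift_def F_def fecundity_def by simp
  finally show ?thesis .
qed

lemma drift_0: "drift 0 s = 0"
proof -
  have "drift 0 s = 1 / real CARD('n) * ((\<Sum>k\<in>UNIV. g2.\<pi> k * (\<Sum>l\<in>UNIV. g2.P k l * of_bool (snd s l)))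
      - (\<Sum>k\<in>UNIV. g2.\<pi> k * of_bool (snd s k)))"
    unfolding drift_def tprob_def strength_def
    by (simp add: right_diff_distrib sum_subtractf del: sum_mult_of_bool_eq sum_of_bool_mult_eq)
  then show ?thesis by (simp only: g2.stationary_avg) simp
qed

lemma drift_has_deriv: "((\<lambda>\<delta>. drift \<delta> s) has_real_derivative drift_deriv s) (at 0)"
proof -
  have "((\<lambda>\<delta>. drift \<delta> s) has_real_derivative 1 / real CARD('n) * (\<Sum>k\<in>UNIV. g2.\<pi> k * ((\<Sum>l\<in>UNIV.
       g2.P k l * (payoff b c r w1 s l - (\<Sum>m\<in>UNIV. g2.P k m * payoff b c r w1 s m)) * of_bool (snd s l)) - 0))) (at 0)"
    unfolding drift_def
    by (intro DERIV_cmult DERIV_sum DERIV_diff DERIV_cmult_right g2.tprob_fecundity_has_deriv DERIV_const)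
  then show ?thesis unfolding drift_deriv_def by simp
qed

definition rho_error :: "real \<Rightarrow> 'n state \<Rightarrow> real" where
  "rho_error \<delta> s = rho2 b c r w1 w2 \<delta> s - hat w2 (snd s) - \<delta> * psi s"

definition step_error :: "real \<Rightarrow> 'n state \<Rightarrow> real" where
  "step_error \<delta> s = (drift \<delta> s - \<delta> * drift_deriv s) + \<delta> * (\<Sum>u\<in>UNIV. (T \<delta> s u - T 0 s u) * psi u)"

lemma rho_error_step:
  assumes "0 \<le> \<delta>" "\<delta> < \<delta>\<^sub>0"
  shows "rho_error \<delta> s = (\<Sum>u\<in>UNIV. T \<delta> s u * rho_error \<delta> u) + step_error \<delta> s"
proof -
  have avg: "(\<Sum>u\<in>UNIV. T \<delta> s u * rho_error \<delta> u)
      = (\<Sum>u\<in>UNIV. T \<delta> s u * rho2 b c r w1 w2 \<delta> u) - (\<Sum>u\<in>UNIV. T \<delta> s u * hat w2 (snd u))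
        - \<delta> * (\<Sum>u\<in>UNIV. T \<delta> s u * psi u)"
    unfolding rho_error_def by (simp add: right_diff_distrib sum_subtractf sum_distrib_left mult.left_commute)
  have poisson: "(\<Sum>u\<in>UNIV. (T \<delta> s u - T 0 s u) * psi u) = (\<Sum>u\<in>UNIV. T \<delta> s u * psi u) - (psi s - drift_deriv s)"
    unfolding psi_poisson[symmetric] trans_0_avg[symmetric] by (simp add: left_diff_distrib sum_subtractf)
  show ?thesis
    unfolding avg rho2_harmonic[OF assms, symmetric] trans_avg_hat[OF assms] step_error_def poisson
    unfolding rho_error_def by (simp add: algebra_simps)
qed

lemma absorbed_op_rho_error:
  assumes "0 \<le> \<delta>" "\<delta> < \<delta>\<^sub>0"
  shows "absorbed_op (rho_error \<delta>) s
    = (if s \<in> absorbing then 0 else (\<Sum>u\<in>UNIV. (T \<delta> s u - T 0 s u) * rho_error \<delta> u) + step_error \<delta> s)"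
proof (cases "s \<in> absorbing")
  case True
  then have "monomorphic (snd s)" unfolding absorbing_def by simp
  with True show ?thesis
    unfolding absorbed_op_def rho_error_def using rho2_monomorphic[OF assms] psi_absorbing by simp
next
  case False
  have "(\<Sum>u\<in>UNIV. (T \<delta> s u - T 0 s u) * rho_error \<delta> u)
      = (\<Sum>u\<in>UNIV. T \<delta> s u * rho_error \<delta> u) - (\<Sum>u\<in>UNIV. T 0 s u * rho_error \<delta> u)"
    by (simp add: left_diff_distrib sum_subtractf)
  then show ?thesis unfolding absorbed_op_def using False rho_error_step[OF assms, of s] by simp
qed

lemma rho_error_le_step_error:
  assumes "0 \<le> \<delta>" "\<delta> < \<delta>\<^sub>0"
    and C: "C > 0" "\<And>v s. \<bar>v s\<bar> \<le> C * (\<Sum>s'\<in>UNIV. \<bar>absorbed_op v s'\<bar>)"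
    and K: "K \<ge> 0" "\<And>s u. \<bar>T \<delta> s u - T 0 s u\<bar> \<le> K * \<delta>"
    and small: "real CARD('n state) ^ 2 * C * K * \<delta> \<le> 1 / 2"
  shows "(\<Sum>s\<in>UNIV. \<bar>rho_error \<delta> s\<bar>) \<le> 2 * real CARD('n state) * C * (\<Sum>s\<in>UNIV. \<bar>step_error \<delta> s\<bar>)"
proof -
  define NS where "NS = real CARD('n state)"
  define SD where "SD = (\<Sum>s\<in>UNIV. \<bar>rho_error \<delta> s\<bar>)"
  define SE where "SE = (\<Sum>s\<in>UNIV. \<bar>step_error \<delta> s\<bar>)"
  have SD_nonneg: "SD \<ge> 0" unfolding SD_def by (simp add: sum_nonneg)
  have op_le: "\<bar>absorbed_op (rho_error \<delta>) s\<bar> \<le> K * \<delta> * SD + \<bar>step_error \<delta> s\<bar>" for s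
  proof (cases "s \<in> absorbing")
    case True
    then show ?thesis using absorbed_op_rho_error[OF assms(1,2), of s] K(1) assms(1) SD_nonneg by simp
  next
    case False
    have "\<bar>\<Sum>u\<in>UNIV. (T \<delta> s u - T 0 s u) * rho_error \<delta> u\<bar> \<le> (\<Sum>u\<in>UNIV. K * \<delta> * \<bar>rho_error \<delta> u\<bar>)"
      by (rule order_trans[OF sum_abs], rule sum_mono) (simp add: abs_mult K(2) mult_right_mono)
    also have "\<dots> = K * \<delta> * SD" unfolding SD_def by (simp add: sum_distrib_left)
    finally show ?thesis
      using absorbed_op_rho_error[OF assms(1,2), of s] False by (simp add: abs_triangle_ineq order_trans)
  qed
  have "\<bar>rho_error \<delta> s\<bar> \<le> C * (NS * (K * \<delta> * SD) + SE)" for s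
  proof -
    have "\<bar>rho_error \<delta> s\<bar> \<le> C * (\<Sum>s'\<in>UNIV. \<bar>absorbed_op (rho_error \<delta>) s'\<bar>)" by (rule C(2))
    also have "(\<Sum>s'\<in>UNIV. \<bar>absorbed_op (rho_error \<delta>) s'\<bar>) \<le> (\<Sum>s'\<in>UNIV. K * \<delta> * SD + \<bar>step_error \<delta> s'\<bar>)"
      by (rule sum_mono) (rule op_le)
    also have "\<dots> = NS * (K * \<delta> * SD) + SE" unfolding NS_def SE_def by (simp add: sum.distrib)
    finally show ?thesis using C(1) by (simp add: mult_left_mono)
  qed
  then have "SD \<le> (\<Sum>s\<in>(UNIV::'n state set). C * (NS * (K * \<delta> * SD) + SE))"
    unfolding SD_def by (rule sum_mono)
  also have "\<dots> = NS * C * (NS * (K * \<delta> * SD) + SE)" unfolding NS_def by simp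
  finally have "SD \<le> NS ^ 2 * C * K * \<delta> * SD + NS * C * SE" by (simp add: algebra_simps power2_eq_square)
  moreover have "NS ^ 2 * C * K * \<delta> * SD \<le> 1/2 * SD"
    unfolding NS_def by (rule mult_right_mono[OF small SD_nonneg])
  ultimately show ?thesis unfolding SD_def SE_def NS_def by linarith
qed

lemma rho2_neutral: "rho2 b c r w1 w2 0 s = hat w2 (snd s)"
proof -
  have "absorbed_op (rho_error 0) s = 0" for s
    using absorbed_op_rho_error[OF order_refl \<delta>\<^sub>0_pos, of s] unfolding step_error_def drift_0 by simp
  then have "absorbed_op (rho_error 0) = (\<lambda>_. 0)" by (simp add: fun_eq_iff)
  then have "rho_error 0 = (\<lambda>_. 0)" by (rule absorbed.op_kernel)
  from fun_cong[OF this, of s] show ?thesis unfolding rho_error_def by simp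
qed

lemma trans_lipschitz_at_0: "\<exists>K\<ge>0. \<forall>\<^sub>F \<delta> in at_right 0. \<forall>s u. \<bar>T \<delta> s u - T 0 s u\<bar> \<le> K * \<delta>"
proof -
  obtain DT where DT: "\<And>p. ((\<lambda>\<delta>. T \<delta> (fst p) (snd p)) has_real_derivative DT p) (at 0)"
    using choice[of "\<lambda>p D. ((\<lambda>\<delta>. T \<delta> (fst p) (snd p)) has_real_derivative D) (at 0)"] trans_differentiable
    by blast
  define K where "K = (\<Sum>p\<in>UNIV. \<bar>DT p\<bar> + 1)"
  have K_ge: "\<bar>DT p\<bar> + 1 \<le> K" for p
    unfolding K_def by (rule member_le_sum[of p UNIV "\<lambda>p. \<bar>DT p\<bar> + 1"]) auto
  have "\<forall>\<^sub>F \<delta> in at_right 0. \<bar>T \<delta> (fst p) (snd p) - T 0 (fst p) (snd p)\<bar> \<le> K * \<delta>" for p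
  proof -
    have "\<forall>\<^sub>F y in at_right 0. dist ((T y (fst p) (snd p) - T 0 (fst p) (snd p)) / y) (DT p) < 1"
      by (rule tendstoD[OF has_real_derivative_at_0_right_quotient[OF DT]]) simp
    then show ?thesis using eventually_at_right_less[of "0::real"]
    proof eventually_elim
      case (elim y)
      define A where "A = T y (fst p) (snd p) - T 0 (fst p) (snd p)"
      have "\<bar>A / y\<bar> \<le> \<bar>DT p\<bar> + 1" using elim(1) unfolding A_def dist_real_def by linarith
      then have "\<bar>A\<bar> \<le> (\<bar>DT p\<bar> + 1) * y" using elim(2) by (simp add: abs_divide pos_divide_le_eq)
      also have "\<dots> \<le> K * y" using K_ge[of p] elim(2) by (simp add: mult_right_mono)
      finally show ?case unfolding A_def .
    qed
  qed
  then have "\<forall>\<^sub>F \<delta> in at_right 0. \<forall>p. \<bar>T \<delta> (fst p) (snd p) - T 0 (fst p) (snd p)\<bar> \<le> K * \<delta>"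
    by (rule eventually_all_finite)
  then have "\<forall>\<^sub>F \<delta> in at_right 0. \<forall>s u. \<bar>T \<delta> s u - T 0 s u\<bar> \<le> K * \<delta>"
    by eventually_elim (metis fst_conv snd_conv)
  moreover have "K \<ge> 0" using K_ge[of undefined] by simp
  ultimately show ?thesis by blast
qed

lemma step_error_little_o: "((\<lambda>\<delta>. step_error \<delta> s / \<delta>) \<longlongrightarrow> 0) (at_right 0)"
proof -
  have drift: "((\<lambda>y. (drift y s - drift 0 s) / y) \<longlongrightarrow> drift_deriv s) (at_right 0)"
    by (rule has_real_derivative_at_0_right_quotient[OF drift_has_deriv])
  have trans: "((\<lambda>y. T y s u) \<longlongrightarrow> T 0 s u) (at_right 0)" for u
    using trans_differentiable[of s u] has_real_derivative_at_0_right_continuous by blast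
  have "((\<lambda>y. ((drift y s - drift 0 s) / y - drift_deriv s) + (\<Sum>u\<in>UNIV. (T y s u - T 0 s u) * psi u))
      \<longlongrightarrow> (drift_deriv s - drift_deriv s) + (\<Sum>u\<in>UNIV. (T 0 s u - T 0 s u) * psi u)) (at_right 0)"
    by (intro tendsto_intros drift trans)
  moreover have "\<forall>\<^sub>F y in at_right 0.
      ((drift y s - drift 0 s) / y - drift_deriv s) + (\<Sum>u\<in>UNIV. (T y s u - T 0 s u) * psi u) = step_error y s / y"
    using eventually_at_right_less[of "0::real"]
    by eventually_elim (simp add: step_error_def drift_0 field_simps)
  ultimately show ?thesis using tendsto_cong by force
qed

lemma rho_error_little_o: "((\<lambda>\<delta>. rho_error \<delta> s / \<delta>) \<longlongrightarrow> 0) (at_right 0)"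
proof -
  obtain C where C: "C > 0" "\<And>v s. \<bar>v s\<bar> \<le> C * (\<Sum>s'\<in>UNIV. \<bar>absorbed_op v s'\<bar>)"
    using absorbed.op_bounded_below by blast
  obtain K where K: "K \<ge> 0" "\<forall>\<^sub>F \<delta> in at_right 0. \<forall>s u. \<bar>T \<delta> s u - T 0 s u\<bar> \<le> K * \<delta>"
    using trans_lipschitz_at_0 by blast
  define NS where "NS = real CARD('n state)"
  have small: "\<forall>\<^sub>F \<delta> in at_right 0. NS ^ 2 * C * K * \<delta> < 1/2"
  proof -
    have "((\<lambda>\<delta>. NS ^ 2 * C * K * \<delta>) \<longlongrightarrow> NS ^ 2 * C * K * 0) (at_right (0::real))"
      by (intro tendsto_intros)
    then show ?thesis by (rule order_tendstoD(2)) simp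
  qed
  have below_\<delta>\<^sub>0: "\<forall>\<^sub>F y in at_right 0. y < \<delta>\<^sub>0"
    using \<delta>\<^sub>0_pos by (simp add: eventually_at_right_field) (blast intro: exI[of _ \<delta>\<^sub>0])
  have bound: "\<forall>\<^sub>F \<delta> in at_right 0. \<bar>rho_error \<delta> s / \<delta>\<bar> \<le> 2 * NS * C * (\<Sum>s\<in>UNIV. \<bar>step_error \<delta> s / \<delta>\<bar>)"
    using K(2) small below_\<delta>\<^sub>0 eventually_at_right_less[of "0::real"]
  proof eventually_elim
    case (elim \<delta>)
    have "\<bar>rho_error \<delta> s\<bar> \<le> (\<Sum>s\<in>UNIV. \<bar>rho_error \<delta> s\<bar>)" by (rule member_le_sum) auto
    also have "\<dots> \<le> 2 * NS * C * (\<Sum>s\<in>UNIV. \<bar>step_error \<delta> s\<bar>)"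
      unfolding NS_def by (rule rho_error_le_step_error[OF _ _ C K(1)]) (use elim in \<open>auto simp: NS_def\<close>)
    finally show ?case
      using elim(4) by (simp add: abs_divide sum_divide_distrib[symmetric] divide_right_mono)
  qed
  have bound_tendsto: "((\<lambda>\<delta>. 2 * NS * C * (\<Sum>s\<in>UNIV. \<bar>step_error \<delta> s / \<delta>\<bar>)) \<longlongrightarrow> 0) (at_right 0)"
  proof -
    have "((\<lambda>\<delta>. 2 * NS * C * (\<Sum>s\<in>UNIV. \<bar>step_error \<delta> s / \<delta>\<bar>))
        \<longlongrightarrow> 2 * NS * C * (\<Sum>s\<in>(UNIV::'n state set). 0)) (at_right 0)"
      by (intro tendsto_intros tendsto_rabs_zero step_error_little_o)
    then show ?thesis by simp
  qed
  show ?thesis by (rule Lim_null_comparison[OF _ bound_tendsto]) (use bound in simp)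
qed

lemma rho2_has_deriv: "((\<lambda>\<delta>. rho2 b c r w1 w2 \<delta> s) has_real_derivative psi s) (at 0 within {0..})"
proof -
  have "((\<lambda>\<delta>. psi s + rho_error \<delta> s / \<delta>) \<longlongrightarrow> psi s + 0) (at_right 0)"
    by (intro tendsto_intros rho_error_little_o)
  moreover have "\<forall>\<^sub>F \<delta> in at_right 0. psi s + rho_error \<delta> s / \<delta>
      = (rho2 b c r w1 w2 \<delta> s - rho2 b c r w1 w2 0 s) / (\<delta> - 0)"
    using eventually_at_right_less[of "0::real"]
    by eventually_elim (simp add: rho_error_def rho2_neutral field_simps)
  ultimately have "((\<lambda>\<delta>. (rho2 b c r w1 w2 \<delta> s - rho2 b c r w1 w2 0 s) / (\<delta> - 0)) \<longlongrightarrow> psi s) (at_right 0)"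
    using tendsto_cong by force
  then show ?thesis unfolding has_field_derivative_iff at_within_Ici_at_right .
qed

end

theorem mainTheorem2:
  fixes w1 w2 :: "'n::finite \<Rightarrow> 'n \<Rightarrow> real" and b c r :: real and \<xi> :: "'n state"
  assumes "CARD('n) \<ge> 2"
    and "graph_ok w1" and "graph_ok w2"
    and "r \<ge> 0"
    and "\<not> (monomorphic (fst \<xi>) \<and> monomorphic (snd \<xi>))"
  shows "\<exists>D. ((\<lambda>\<delta>. rho2 b c r w1 w2 \<delta> \<xi>) has_real_derivative D) (at 0 within {0..})
           \<and> (D > 0 \<longleftrightarrow>
              - (r - 1) * thetaT w2 (snd \<xi>) 2 + c * phiT w1 w2 \<xi> 2 0
              + b * (phiT w1 w2 \<xi> 0 1 - phiT w1 w2 \<xi> 2 1) > 0)"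
proof -
  interpret two_layer_game w1 w2 b c r
    by unfold_locales (use assms in simp_all)
  have "psi \<xi> > 0 \<longleftrightarrow> - (r - 1) * thetaT w2 (snd \<xi>) 2 + c * phiT w1 w2 \<xi> 2 0
      + b * (phiT w1 w2 \<xi> 0 1 - phiT w1 w2 \<xi> 2 1) > 0"
    unfolding psi_def by (simp add: zero_less_divide_iff)
  then show ?thesis using rho2_has_deriv[of \<xi>] by blast
qed

end
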